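(* Let $N\ge2$, $\Omega=\mathbb{R}^{N-1}\times(0,\infty)$, $\phi\in L^p(\Omega)$ with $p\in[1,\infty)$, and let $z_{\epsilon,k}$, $z^N_\epsilon$, $z^D_\epsilon$, $f_p$ be as in the context. Then for every $T>0$, \[\sup_{(x,t)\in\overline\Omega\times(T,\infty)}|z_{\epsilon,k}(x,t)|=O(\epsilon^{\frac N{2p}})\ \text{as }\epsilon\to0^+\text{ for each fixed }k>0,\qquad \sup_{(x,t)\in\overline\Omega\times(T,\infty)}|z^N_\epsilon(x,t)|=O(\epsilon^{\frac N{2p}})\ \text{as }\epsilon\to0^+,\] and for every $R>0$ and fixed $\epsilon>0$, $\sup_{(x,t)\in Q(R)}|z_{\epsilon,k}(x,t)-z^D_\epsilon(x,t)|=O(f_p(k))$ as $k\to\infty$.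
   Context: $x=(x',x_N)$. $\Gamma_d(x,t)=(4\pi t)^{-d/2}e^{-|x|^2/(4t)}$, $\partial_\xi\Gamma_1$ the spatial derivative of $\Gamma_1$, $y^*=(y',-y_N)$, $G_0(x,y,s)=\Gamma_N(x-y,s)-\Gamma_N(x-y^*,s)$, $G_N(x,y,s)=\Gamma_N(x-y,s)+\Gamma_N(x-y^*,s)$. For $\epsilon>0$, $k\ge0$: $\Psi_{\epsilon,k}(x,y,t)=G_0(x,y,t/\epsilon)-2\int_0^\infty\Gamma_{N-1}(x'-y',\frac t\epsilon+k\tau)\partial_\xi\Gamma_1(x_N+y_N+\tau,\frac t\epsilon)d\tau$; $z_{\epsilon,k}(x,t)=\int_\Omega\Psi_{\epsilon,k}(x,y,t)\phi(y)dy$ (solution of $\epsilon\partial_tu=\Delta u$ in $\Omega$, $-k\Delta'u-\partial_{x_N}u=0$ on $\partial\Omega$, $u(0)=\phi$); $z^N_\epsilon(x,t)=\int_\Omega G_N(x,y,t/\epsilon)\phi(y)dy$ (Neumann problem); $z^D_\epsilon(x,t)=\int_\Omega G_0(x,y,t/\epsilon)\phi(y)dy$ (homogeneous Dirichlet problem). $Q(R)=\{(x,t)\in\overline\Omega\times(0,\infty):x_N+t>R\}$. With $p_N=(N-1)/2$, $f_p(r)=r^{-1}$ if $p<p_N$, $r^{-1}\log r$ if $p=p_N$, $r^{-\frac{N-1}{2p}}$ if $p>p_N$, for $r>1$. *)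

theory Defs
  imports "HOL-Analysis.Analysis"
begin

text \<open>Points of R^N are pairs (x', x_N) with x' :: 'a, DIM('a) = N - 1.\<close>

definition heat :: "'b::euclidean_space \<Rightarrow> real \<Rightarrow> real" where
  "heat x t = (4 * pi * t) powr (- real DIM('b) / 2) * exp (- (norm x ^ 2) / (4 * t))"

definition dheat1 :: "real \<Rightarrow> real \<Rightarrow> real" where
  "dheat1 \<xi> t = deriv (\<lambda>\<eta>::real. heat \<eta> t) \<xi>"

definition Omega :: "('a::euclidean_space \<times> real) set" where
  "Omega = UNIV \<times> {0<..}"

definition reflN :: "'a::euclidean_space \<times> real \<Rightarrow> 'a \<times> real" where
  "reflN y = (fst y, - snd y)"

definition G0 :: "'a::euclidean_space \<times> real \<Rightarrow> 'a \<times> real \<Rightarrow> real \<Rightarrow> real" where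
  "G0 x y s = heat (x - y) s - heat (x - reflN y) s"

definition GN :: "'a::euclidean_space \<times> real \<Rightarrow> 'a \<times> real \<Rightarrow> real \<Rightarrow> real" where
  "GN x y s = heat (x - y) s + heat (x - reflN y) s"

definition Psi :: "real \<Rightarrow> real \<Rightarrow> 'a::euclidean_space \<times> real \<Rightarrow> 'a \<times> real \<Rightarrow> real \<Rightarrow> real" where
  "Psi \<epsilon> k x y t = G0 x y (t / \<epsilon>)
     - 2 * (LBINT \<tau>:{0<..}. heat (fst x - fst y) (t / \<epsilon> + k * \<tau>)
                              * dheat1 (snd x + snd y + \<tau>) (t / \<epsilon>))"

definition zek :: "real \<Rightarrow> real \<Rightarrow> ('a::euclidean_space \<times> real \<Rightarrow> real) \<Rightarrow> 'a \<times> real \<Rightarrow> real \<Rightarrow> real" where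
  "zek \<epsilon> k \<phi> x t = (LINT y:Omega|lebesgue. Psi \<epsilon> k x y t * \<phi> y)"

definition zN :: "real \<Rightarrow> ('a::euclidean_space \<times> real \<Rightarrow> real) \<Rightarrow> 'a \<times> real \<Rightarrow> real \<Rightarrow> real" where
  "zN \<epsilon> \<phi> x t = (LINT y:Omega|lebesgue. GN x y (t / \<epsilon>) * \<phi> y)"

definition zD :: "real \<Rightarrow> ('a::euclidean_space \<times> real \<Rightarrow> real) \<Rightarrow> 'a \<times> real \<Rightarrow> real \<Rightarrow> real" where
  "zD \<epsilon> \<phi> x t = (LINT y:Omega|lebesgue. G0 x y (t / \<epsilon>) * \<phi> y)"

definition Qset :: "real \<Rightarrow> (('a::euclidean_space \<times> real) \<times> real) set" where
  "Qset R = {(x, t). x \<in> closure Omega \<and> t > 0 \<and> snd x + t > R}"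

text \<open>f_p with N the space dimension, p_N = (N-1)/2\<close>
definition fp :: "nat \<Rightarrow> real \<Rightarrow> real \<Rightarrow> real" where
  "fp N p r = (if p < (real N - 1) / 2 then 1 / r
               else if p = (real N - 1) / 2 then ln r / r
               else r powr (- (real N - 1) / (2 * p)))"

end

theory Submission
  imports Defs "HOL-Probability.Distributions"
begin

(* On the closed half space every kernel is dominated by Gaussians: |G0|, |GN| <= 2 \<Gamma>_N(x - y, s)
   and |\<partial>\<xi>\<Gamma>_1(\<xi>, s)| <= \<surd>2 s^(-1/2) \<Gamma>_1(\<xi>, 2s). Instead of Hoelder's inequality we apply Young's
   inequality pointwise: if 0 <= K <= A M and \<integral>K <= M, then
   \<integral>|\<phi>| K <= (\<parallel>\<phi>\<parallel>_p^p / p + 1) A^(1/p) M.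
   For the heat kernel at time s = t/\<epsilon> the height is A = (4\<pi>s)^(-N/2), which gives the rate
   \<epsilon>^(N/(2p)). The boundary term of \<Psi> gets the same bound for every \<tau> before integrating in \<tau>.
   Its height now carries the factor (s + k\<tau>)^(-(N-1)/2), and in the region x_N + t > R the
   Gaussian factor exp (-(x_N + \<tau>)^2/(8s)) absorbs every power of s, which leaves
   \<integral>_0^\<infinity> (s + k\<tau>)^(-(N-1)/(2p)) exp (-\<tau>^2/(8s)) d\<tau> = O(f_p(k)). *)

lemma measurable_fst_borel [measurable (raw)]:
  fixes f :: "'c \<Rightarrow> 'a::second_countable_topology \<times> 'b::second_countable_topology"
  assumes "f \<in> M \<rightarrow>\<^sub>M borel"
  shows "(\<lambda>x. fst (f x)) \<in> M \<rightarrow>\<^sub>M borel"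
  using measurable_compose[OF assms borel_measurable_continuous_onI[OF continuous_on_fst[OF continuous_on_id]]]
  by simp

lemma measurable_snd_borel [measurable (raw)]:
  fixes f :: "'c \<Rightarrow> 'a::second_countable_topology \<times> 'b::second_countable_topology"
  assumes "f \<in> M \<rightarrow>\<^sub>M borel"
  shows "(\<lambda>x. snd (f x)) \<in> M \<rightarrow>\<^sub>M borel"
  using measurable_compose[OF assms borel_measurable_continuous_onI[OF continuous_on_snd[OF continuous_on_id]]]
  by simp

lemma abs_integral_le_nn_integral:
  fixes f :: "'b \<Rightarrow> real"
  shows "ennreal \<bar>integral\<^sup>L M f\<bar> \<le> (\<integral>\<^sup>+x. ennreal \<bar>f x\<bar> \<partial>M)"
proof (cases "integrable M f")
  case True
  then show ?thesis using integral_norm_bound_ennreal[OF True] by simp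
qed (simp add: not_integrable_integral_eq)

lemma abs_set_integral_le_nn_integral:
  fixes f :: "'b \<Rightarrow> real"
  assumes "(\<integral>\<^sup>+y. ennreal \<bar>indicator S y *\<^sub>R f y\<bar> \<partial>M) \<le> ennreal B" "0 \<le> B"
  shows "\<bar>LINT y:S|M. f y\<bar> \<le> B"
proof -
  have "ennreal \<bar>LINT y:S|M. f y\<bar> \<le> ennreal B"
    unfolding set_lebesgue_integral_def using abs_integral_le_nn_integral assms(1) by (rule order_trans)
  then show ?thesis using assms(2) by (simp add: ennreal_le_iff)
qed

lemma set_integrable_mult_bounded:
  fixes \<phi> :: "'c::euclidean_space \<Rightarrow> real"
  assumes "set_borel_measurable lebesgue S \<phi>" "g \<in> borel_measurable lborel"
    and "(\<integral>\<^sup>+y. ennreal \<bar>indicator S y *\<^sub>R (g y * \<phi> y)\<bar> \<partial>lebesgue) \<le> ennreal B"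
  shows "set_integrable lebesgue S (\<lambda>y. g y * \<phi> y)"
  unfolding set_integrable_def
proof (rule integrableI_bounded)
  have "(\<lambda>y. g y * (indicator S y *\<^sub>R \<phi> y)) \<in> borel_measurable lebesgue"
    using assms(1) measurable_completion[OF assms(2)] unfolding set_borel_measurable_def by measurable
  then show "(\<lambda>y. indicator S y *\<^sub>R (g y * \<phi> y)) \<in> borel_measurable lebesgue"
    by (simp add: mult_ac)
  show "(\<integral>\<^sup>+y. ennreal (norm (indicator S y *\<^sub>R (g y * \<phi> y))) \<partial>lebesgue) < \<infinity>"
    using assms(3) by (simp add: order_le_less_trans)
qed

lemma nn_integral_kernel_le:
  fixes \<phi> :: "'c::euclidean_space \<Rightarrow> real"
  assumes "\<And>y. y \<in> S \<Longrightarrow> \<bar>g y\<bar> \<le> h y"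
  shows "(\<integral>\<^sup>+y. ennreal \<bar>indicator S y *\<^sub>R (g y * \<phi> y)\<bar> \<partial>lebesgue)
       \<le> (\<integral>\<^sup>+y. ennreal (indicator S y * \<bar>\<phi> y\<bar>) * ennreal (h y) \<partial>lebesgue)"
proof (intro nn_integral_mono)
  fix y
  show "ennreal \<bar>indicator S y *\<^sub>R (g y * \<phi> y)\<bar> \<le> ennreal (indicator S y * \<bar>\<phi> y\<bar>) * ennreal (h y)"
  proof (cases "y \<in> S")
    case True
    have "\<bar>g y * \<phi> y\<bar> = \<bar>\<phi> y\<bar> * \<bar>g y\<bar>" by (simp add: abs_mult)
    also have "\<dots> \<le> \<bar>\<phi> y\<bar> * h y" using assms[OF True] by (rule mult_left_mono) simp
    finally have "\<bar>g y * \<phi> y\<bar> \<le> \<bar>\<phi> y\<bar> * h y" .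
    moreover have "0 \<le> h y" using assms[OF True] by (meson abs_ge_zero order_trans)
    ultimately show ?thesis
      using True by (simp add: ennreal_mult[symmetric] ennreal_leI del: ennreal_mult)
  qed simp
qed

lemma nn_integral_lborel_pair:
  fixes f :: "'a::euclidean_space \<times> 'b::euclidean_space \<Rightarrow> ennreal"
  assumes "f \<in> borel_measurable (lborel \<Otimes>\<^sub>M lborel)"
  shows "(\<integral>\<^sup>+y. f y \<partial>lborel) = (\<integral>\<^sup>+y\<^sub>1. (\<integral>\<^sup>+y\<^sub>2. f (y\<^sub>1, y\<^sub>2) \<partial>lborel) \<partial>lborel)"
  using lborel.nn_integral_fst[OF assms] by (simp add: lborel_prod)

section \<open>The heat kernel\<close>

lemma heat_nonneg: "0 \<le> heat x t"
  by (simp add: heat_def)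

lemma heat_le: "0 < t \<Longrightarrow> heat x t \<le> (4 * pi * t) powr (- real DIM('b) / 2)"
  for x :: "'b::euclidean_space"
  by (simp add: heat_def)

lemma heat_minus_commute: "heat (a - b) t = heat (b - a) t"
  by (simp add: heat_def norm_minus_commute)

lemma heat_mono_norm: "0 < t \<Longrightarrow> norm x \<le> norm y \<Longrightarrow> heat y t \<le> heat x t"
  for x y :: "'b::euclidean_space"
  unfolding heat_def by (intro mult_left_mono) (auto intro!: divide_right_mono power_mono)

lemma heat_reflN_le:
  fixes x y :: "'a::euclidean_space \<times> real"
  assumes "0 \<le> snd x" "0 \<le> snd y" "0 < t"
  shows "heat (x - reflN y) t \<le> heat (x - y) t"
proof (rule heat_mono_norm[OF assms(3)])
  have "\<bar>snd x - snd y\<bar> \<le> \<bar>snd x + snd y\<bar>" using assms by auto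
  then have "(snd x - snd y)^2 \<le> (snd x + snd y)^2"
    by (metis abs_le_square_iff)
  then show "norm (x - y) \<le> norm (x - reflN y)"
    unfolding reflN_def by (cases x, cases y) (simp add: norm_Pair)
qed

lemma heat_measurable [measurable]:
  assumes [measurable]: "f \<in> borel_measurable M" "g \<in> borel_measurable M"
  shows "(\<lambda>x. heat (f x) (g x)) \<in> borel_measurable M"
  unfolding heat_def by measurable

lemma heat_eq_prod_normal_density:
  fixes y :: "'b::euclidean_space"
  assumes "0 < t"
  shows "heat y t = (\<Prod>b\<in>Basis. normal_density 0 (sqrt (2 * t)) (y \<bullet> b))"
proof -
  have n: "norm y ^ 2 = (\<Sum>b\<in>Basis. (y \<bullet> b)^2)"
    by (simp add: power2_norm_eq_inner) (subst euclidean_inner, simp add: power2_eq_square)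
  have s2: "(sqrt (2 * t))\<^sup>2 = 2 * t" using assms by simp
  have c: "1 / sqrt (2 * pi * (sqrt (2 * t))\<^sup>2) = (4 * pi * t) powr (-1/2)"
    using assms unfolding s2 by (simp add: powr_minus_divide powr_half_sqrt[symmetric] field_simps)
  have "(4 * pi * t) powr (- real DIM('b) / 2) = ((4 * pi * t) powr (-1/2)) ^ DIM('b)"
    using assms by (simp add: powr_realpow[symmetric] powr_powr)
  also have "\<dots> = (\<Prod>b\<in>(Basis::'b set). 1 / sqrt (2 * pi * (sqrt (2 * t))\<^sup>2))"
    by (simp add: c)
  finally have 1: "(4 * pi * t) powr (- real DIM('b) / 2) = \<dots>" .
  have 2: "exp (- (norm y ^ 2) / (4 * t))
      = (\<Prod>b\<in>(Basis::'b set). exp (- ((y \<bullet> b)\<^sup>2) / (2 * (sqrt (2 * t))\<^sup>2)))"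
    using assms by (simp add: n exp_sum[symmetric] sum_negf sum_divide_distrib[symmetric])
  show ?thesis
    unfolding heat_def normal_density_def 1 2 prod.distrib by simp
qed

lemma nn_integral_heat:
  fixes x :: "'b::euclidean_space"
  assumes "0 < t"
  shows "(\<integral>\<^sup>+y. ennreal (heat (y - x) t) \<partial>lborel) = 1"
proof -
  have "(\<integral>\<^sup>+y. ennreal (heat (y - x) t) \<partial>lborel)
     = (\<integral>\<^sup>+y. (\<Prod>b\<in>Basis. ennreal (normal_density (x \<bullet> b) (sqrt (2 * t)) (y \<bullet> b))) \<partial>lborel)"
    using assms by (intro nn_integral_cong)
      (simp add: heat_eq_prod_normal_density prod_ennreal normal_density_def inner_diff_left)
  also have "\<dots> = (\<Prod>b\<in>(Basis::'b set). \<integral>\<^sup>+z. ennreal (normal_density (x \<bullet> b) (sqrt (2 * t)) z) \<partial>lborel)"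
    by (subst nn_integral_lborel_prod) auto
  also have "\<dots> = 1"
  proof -
    have "(\<integral>\<^sup>+z. ennreal (normal_density m s z) \<partial>lborel) = 1" if "0 < s" for m s
      using that by (subst nn_integral_eq_integral) auto
    then show ?thesis using assms by simp
  qed
  finally show ?thesis .
qed

lemma nn_integral_heat':
  fixes x :: "'b::euclidean_space"
  shows "0 < t \<Longrightarrow> (\<integral>\<^sup>+y. ennreal (heat (x - y) t) \<partial>lborel) = 1"
  by (subst heat_minus_commute) (rule nn_integral_heat)

lemma heat_real: "heat (\<xi>::real) t = (4 * pi * t) powr (-1/2) * exp (- (\<xi>^2) / (4 * t))"
  by (simp add: heat_def)

lemma exp_eq_heat:
  assumes "0 < \<sigma>"
  shows "exp (- (\<tau>^2) / (8 * \<sigma>)) = (8 * pi * \<sigma>) powr (1/2) * heat (\<tau>::real) (2 * \<sigma>)"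
proof -
  have "4 * pi * (2 * \<sigma>) = 8 * pi * \<sigma>" "4 * (2 * \<sigma>) = 8 * \<sigma>" by simp_all
  then have h: "heat \<tau> (2 * \<sigma>) = (8 * pi * \<sigma>) powr (-1/2) * exp (- (\<tau>^2) / (8 * \<sigma>))"
    unfolding heat_real by metis
  have "(8 * pi * \<sigma>) powr (1/2) * (8 * pi * \<sigma>) powr (-1/2) = 1"
    using assms by (simp add: powr_add[symmetric])
  then show ?thesis unfolding h by (metis mult.assoc mult_1)
qed

lemma heat_real_double_le:
  assumes "0 < \<sigma>"
  shows "heat (\<xi>::real) (2 * \<sigma>) \<le> (8 * pi * \<sigma>) powr (-1/2)"
proof -
  have "heat \<xi> (2 * \<sigma>) \<le> (4 * pi * (2 * \<sigma>)) powr (- real DIM(real) / 2)"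
    using assms by (intro heat_le) simp
  also have "4 * pi * (2 * \<sigma>) = 8 * pi * \<sigma>" by simp
  finally show ?thesis by simp
qed

lemma heat_shift_le:
  assumes "0 \<le> a" "0 \<le> y" "0 < t"
  shows "heat (a + y :: real) t \<le> exp (- (a^2) / (4 * t)) * heat y t"
proof -
  have "- ((a + y)^2) / (4 * t) \<le> - (a^2) / (4 * t) + - (y^2) / (4 * t)"
    using assms by (simp add: divide_right_mono power2_eq_square field_simps)
  then have "exp (- ((a + y)^2) / (4 * t)) \<le> exp (- (a^2) / (4 * t)) * exp (- (y^2) / (4 * t))"
    by (simp add: exp_add[symmetric])
  then have "(4 * pi * t) powr (-1/2) * exp (- ((a + y)^2) / (4 * t))
      \<le> (4 * pi * t) powr (-1/2) * (exp (- (a^2) / (4 * t)) * exp (- (y^2) / (4 * t)))"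
    by (rule mult_left_mono) simp
  then show ?thesis unfolding heat_real by (simp only: mult_ac)
qed

lemma dheat1_eq:
  assumes "0 < t"
  shows "dheat1 \<xi> t = - (\<xi> / (2 * t)) * heat \<xi> t"
proof -
  have "((\<lambda>\<eta>::real. - (\<eta>^2) / (4 * t)) has_real_derivative (- (2 * \<xi>) / (4 * t))) (at \<xi>)"
    using assms by (auto intro!: derivative_eq_intros)
  then have "((\<lambda>\<eta>::real. heat \<eta> t) has_real_derivative
      ((4 * pi * t) powr (-1/2) * (exp (- (\<xi>^2) / (4 * t)) * (- (2 * \<xi>) / (4 * t))))) (at \<xi>)"
    unfolding heat_real by (intro DERIV_cmult DERIV_fun_exp)
  moreover have "(4 * pi * t) powr (-1/2) * (exp (- (\<xi>^2) / (4 * t)) * (- (2 * \<xi>) / (4 * t)))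
      = - (\<xi> / (2 * t)) * heat \<xi> t"
    using assms unfolding heat_real by (simp add: field_simps)
  ultimately show ?thesis
    unfolding dheat1_def by (metis DERIV_imp_deriv)
qed

definition dheat1_majorant :: "real \<Rightarrow> real \<Rightarrow> real" where
  "dheat1_majorant \<xi> t = sqrt 2 * t powr (-1/2) * heat \<xi> (2 * t)"

lemma dheat1_majorant_nonneg: "0 < t \<Longrightarrow> 0 \<le> dheat1_majorant \<xi> t"
  by (simp add: dheat1_majorant_def heat_nonneg)

lemma dheat1_majorant_measurable [measurable]:
  assumes [measurable]: "f \<in> borel_measurable M" "g \<in> borel_measurable M"
  shows "(\<lambda>x. dheat1_majorant (f x) (g x)) \<in> borel_measurable M"
  unfolding dheat1_majorant_def by measurable

lemma dheat1_majorant_eq: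
  assumes "0 < t"
  shows "dheat1_majorant \<xi> t = t powr (-1/2) * (4 * pi * t) powr (-1/2) * exp (- (\<xi>^2) / (8 * t))"
proof -
  have "(4 * pi * (2 * t)) powr (-1/2) = 2 powr (-1/2) * (4 * pi * t) powr (-1/2)"
    using assms by (subst powr_mult[symmetric]) (auto simp: mult_ac)
  moreover have "sqrt 2 * 2 powr (-1/2) = 1"
    by (simp add: powr_half_sqrt[symmetric] powr_add[symmetric])
  ultimately have "sqrt 2 * (4 * pi * (2 * t)) powr (-1/2) = (4 * pi * t) powr (-1/2)"
    by (metis mult.assoc mult_1)
  then show ?thesis
    unfolding dheat1_majorant_def heat_real by (simp add: field_simps)
qed

(* With u = |\<xi>| / (2 \<surd>t) the prefactor |\<xi>| / (2t) of dheat1 equals u / \<surd>t, and u <= exp (u^2/2)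
   is absorbed by half of the Gaussian exponent. *)
lemma abs_dheat1_le:
  assumes t: "0 < t"
  shows "\<bar>dheat1 \<xi> t\<bar> \<le> dheat1_majorant \<xi> t"
proof -
  define u where "u = \<bar>\<xi>\<bar> / (2 * sqrt t)"
  define E where "E = exp (- (\<xi>^2) / (8 * t))"
  have st: "sqrt t * sqrt t = t" using t by simp
  have "u \<le> 1 + u^2 / 2"
  proof -
    have "0 \<le> (u - 1)^2 + 1" by simp
    then show ?thesis by (simp add: power2_eq_square algebra_simps)
  qed
  also have "\<dots> \<le> exp (u^2 / 2)" by (rule exp_ge_add_one_self)
  also have "u^2 / 2 = \<xi>^2 / (8 * t)"
    unfolding u_def power_divide power_mult_distrib using t by (simp add: power2_eq_square)
  finally have "u * E \<le> exp (\<xi>^2 / (8 * t)) * E"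
    by (rule mult_right_mono) (simp add: E_def)
  also have "exp (\<xi>^2 / (8 * t)) * E = 1"
    unfolding E_def by (simp add: exp_add[symmetric])
  finally have ue: "u * E \<le> 1" .
  have e2: "exp (- (\<xi>^2) / (4 * t)) = E * E"
    unfolding E_def by (simp add: exp_add[symmetric])
  have tp: "t powr (-1/2) = 1 / sqrt t"
    using t by (simp add: powr_minus_divide powr_half_sqrt)
  have a: "\<bar>\<xi>\<bar> / (2 * t) = u * t powr (-1/2)"
    unfolding tp u_def using st by (metis divide_divide_eq_left times_divide_eq_right mult.commute mult_1)
  have "\<bar>dheat1 \<xi> t\<bar> = \<bar>\<xi>\<bar> / (2 * t) * ((4 * pi * t) powr (-1/2) * exp (- (\<xi>^2) / (4 * t)))"
    using t by (simp add: dheat1_eq heat_real abs_mult)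
  also have "\<dots> = (u * E) * (t powr (-1/2) * (4 * pi * t) powr (-1/2) * E)"
    unfolding a e2 by (simp only: mult_ac)
  also have "\<dots> \<le> 1 * (t powr (-1/2) * (4 * pi * t) powr (-1/2) * E)"
    by (intro mult_right_mono ue) (simp add: E_def)
  finally show ?thesis using t by (simp add: dheat1_majorant_eq E_def)
qed

lemma dheat1_majorant_shift_le:
  assumes "0 \<le> a" "0 \<le> y" "0 < \<sigma>"
  shows "dheat1_majorant (a + y) \<sigma>
    \<le> sqrt 2 * \<sigma> powr (-1/2) * exp (- (a^2) / (8 * \<sigma>)) * heat y (2 * \<sigma>)"
proof -
  have "dheat1_majorant (a + y) \<sigma>
      \<le> sqrt 2 * \<sigma> powr (-1/2) * (exp (- (a^2) / (4 * (2 * \<sigma>))) * heat y (2 * \<sigma>))"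
    unfolding dheat1_majorant_def using assms by (intro mult_left_mono heat_shift_le) auto
  also have "4 * (2 * \<sigma>) = 8 * \<sigma>" by simp
  finally show ?thesis by (simp only: mult.assoc)
qed

section \<open>A Young-type bound for integrals against kernels\<close>

lemma le_Young_powr:
  fixes f \<mu> p :: real
  assumes "1 \<le> p" "0 \<le> f" "0 < \<mu>"
  shows "f \<le> f powr p * \<mu> powr (1 - p) / p + \<mu>"
proof (cases "p = 1 \<or> f = 0")
  case True
  then show ?thesis using assms by auto
next
  case False
  then have p1: "p > 1" and f0: "f > 0" using assms by auto
  define q where "q = p / (p - 1)"
  have q1: "q > 1" using p1 by (simp add: q_def field_simps)
  have pq: "1/p + 1/q = 1" using p1 by (simp add: q_def field_simps)
  define a where "a = f * \<mu> powr ((1 - p) / p)"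
  define b where "b = \<mu> powr ((p - 1) / p)"
  have ab: "a * b = f"
    using assms p1 by (simp add: a_def b_def mult.assoc powr_add[symmetric] field_simps)
  have y: "a * b \<le> a powr p / p + b powr q / q"
    using Youngs_inequality[OF p1 q1 pq] assms by (simp add: a_def b_def)
  have e1: "a powr p = f powr p * \<mu> powr (1 - p)"
    using assms p1 by (simp add: a_def powr_mult powr_powr)
  have e2: "b powr q = \<mu>"
    using assms p1 by (simp add: b_def powr_powr q_def)
  have "\<mu> / q \<le> \<mu>" using q1 assms by (simp add: divide_le_eq)
  moreover have "f \<le> f powr p * \<mu> powr (1 - p) / p + \<mu> / q"
    using y unfolding ab e1 e2 .
  ultimately show ?thesis by linarith
qed

(* Young's inequality with \<mu> = A^(1/p): the weight K \<mu>^(1-p) <= A M \<mu>^(1-p) = \<mu> M of the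
   first term no longer depends on K. *)
lemma mult_le_Young_kernel:
  fixes f K A M p :: real
  assumes "1 \<le> p" "0 \<le> f" "0 < A" "0 \<le> K" "K \<le> A * M"
  shows "f * K \<le> f powr p * (A powr (1/p) * M) / p + K * A powr (1/p)"
proof -
  define \<mu> where "\<mu> = A powr (1/p)"
  have mu: "\<mu> > 0" using assms by (simp add: \<mu>_def)
  have Amu: "A * \<mu> powr (1 - p) = \<mu>"
  proof -
    have "A = \<mu> powr p" using assms by (simp add: \<mu>_def powr_powr)
    then have "A * \<mu> powr (1 - p) = \<mu> powr (p + (1 - p))"
      using mu by (simp add: powr_add[symmetric])
    then show ?thesis using mu by simp
  qed
  have "f * K \<le> (f powr p * \<mu> powr (1 - p) / p + \<mu>) * K"
    using le_Young_powr[OF assms(1,2) mu] assms by (intro mult_right_mono) auto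
  also have "\<dots> = K * (f powr p * \<mu> powr (1 - p)) / p + K * \<mu>" by (simp add: algebra_simps)
  also have "\<dots> \<le> (A * M) * (f powr p * \<mu> powr (1 - p)) / p + K * \<mu>"
    using assms mu by (intro add_right_mono divide_right_mono mult_right_mono) auto
  also have "(A * M) * (f powr p * \<mu> powr (1 - p)) = f powr p * (\<mu> * M)"
    using Amu by (metis mult.commute mult.left_commute)
  finally show ?thesis by (simp add: \<mu>_def)
qed

lemma nn_integral_mult_le_Young_kernel:
  fixes K A M :: "real \<Rightarrow> real"
  assumes p: "1 \<le> p" and f: "0 \<le> f"
    and [measurable]: "T \<in> sets borel" "K \<in> borel_measurable borel"
      "A \<in> borel_measurable borel" "M \<in> borel_measurable borel"
    and K: "\<And>\<tau>. \<tau> \<in> T \<Longrightarrow> 0 \<le> K \<tau> \<and> K \<tau> \<le> A \<tau> * M \<tau>"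
    and A: "\<And>\<tau>. \<tau> \<in> T \<Longrightarrow> 0 < A \<tau>"
  shows "ennreal f * (\<integral>\<^sup>+\<tau>. ennreal (indicator T \<tau> * K \<tau>) \<partial>lborel)
    \<le> ennreal (f powr p / p) * (\<integral>\<^sup>+\<tau>. ennreal (indicator T \<tau> * (A \<tau> powr (1/p) * M \<tau>)) \<partial>lborel)
       + (\<integral>\<^sup>+\<tau>. ennreal (indicator T \<tau> * K \<tau> * A \<tau> powr (1/p)) \<partial>lborel)"
proof -
  have "ennreal f * ennreal (indicator T \<tau> * K \<tau>)
      \<le> ennreal (f powr p / p) * ennreal (indicator T \<tau> * (A \<tau> powr (1/p) * M \<tau>))
         + ennreal (indicator T \<tau> * K \<tau> * A \<tau> powr (1/p))" for \<tau>
  proof (cases "\<tau> \<in> T")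
    case True
    have M0: "0 \<le> M \<tau>"
      using order_trans[of 0 "K \<tau>" "A \<tau> * M \<tau>"] K[OF True] A[OF True] by (simp add: zero_le_mult_iff)
    have n1: "0 \<le> f powr p / p" and n2: "0 \<le> A \<tau> powr (1/p) * M \<tau>"
      and n3: "0 \<le> K \<tau> * A \<tau> powr (1/p)"
      using p M0 K[OF True] by auto
    have "ennreal f * ennreal (K \<tau>) = ennreal (f * K \<tau>)"
      using f K[OF True] by (simp add: ennreal_mult)
    also have "\<dots> \<le> ennreal (f powr p / p * (A \<tau> powr (1/p) * M \<tau>) + K \<tau> * A \<tau> powr (1/p))"
      using mult_le_Young_kernel[OF p f A[OF True]] K[OF True] by (intro ennreal_leI) simp
    also have "\<dots> = ennreal (f powr p / p * (A \<tau> powr (1/p) * M \<tau>)) + ennreal (K \<tau> * A \<tau> powr (1/p))"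
      using n3 mult_nonneg_nonneg[OF n1 n2] by (rule ennreal_plus[rotated])
    also have "ennreal (f powr p / p * (A \<tau> powr (1/p) * M \<tau>)) = ennreal (f powr p / p) * ennreal (A \<tau> powr (1/p) * M \<tau>)"
      by (rule ennreal_mult[OF n1 n2])
    finally show ?thesis using True by simp
  qed simp
  then have "ennreal f * (\<integral>\<^sup>+\<tau>. ennreal (indicator T \<tau> * K \<tau>) \<partial>lborel)
      \<le> (\<integral>\<^sup>+\<tau>. ennreal (f powr p / p) * ennreal (indicator T \<tau> * (A \<tau> powr (1/p) * M \<tau>))
         + ennreal (indicator T \<tau> * K \<tau> * A \<tau> powr (1/p)) \<partial>lborel)"
    by (subst nn_integral_cmult[symmetric]) (auto intro!: nn_integral_mono)
  also have "\<dots> = ennreal (f powr p / p) * (\<integral>\<^sup>+\<tau>. ennreal (indicator T \<tau> * (A \<tau> powr (1/p) * M \<tau>)) \<partial>lborel)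
       + (\<integral>\<^sup>+\<tau>. ennreal (indicator T \<tau> * K \<tau> * A \<tau> powr (1/p)) \<partial>lborel)"
    by (subst nn_integral_add) (auto intro!: nn_integral_cmult)
  finally show ?thesis .
qed

lemma nn_integral_kernel_mass_le:
  fixes K :: "'c::euclidean_space \<Rightarrow> real \<Rightarrow> real" and A M :: "real \<Rightarrow> real"
  assumes [measurable]: "S \<in> sets borel" "T \<in> sets borel" "case_prod K \<in> borel_measurable borel"
      "A \<in> borel_measurable borel"
    and mass: "\<And>\<tau>. \<tau> \<in> T \<Longrightarrow> (\<integral>\<^sup>+y. ennreal (indicator S y * K y \<tau>) \<partial>lborel) \<le> ennreal (M \<tau>)"
    and K0: "\<And>y \<tau>. 0 \<le> K y \<tau>" and M0: "\<And>\<tau>. \<tau> \<in> T \<Longrightarrow> 0 \<le> M \<tau>"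
  shows "(\<integral>\<^sup>+y. (\<integral>\<^sup>+\<tau>. ennreal (indicator S y * indicator T \<tau> * K y \<tau> * A \<tau> powr (1/p)) \<partial>lborel) \<partial>lborel)
    \<le> (\<integral>\<^sup>+\<tau>. ennreal (indicator T \<tau> * (A \<tau> powr (1/p) * M \<tau>)) \<partial>lborel)"
proof -
  have [measurable]: "case_prod K \<in> borel_measurable (lborel \<Otimes>\<^sub>M lborel)"
    unfolding lborel_prod by simp
  have "(\<integral>\<^sup>+y. (\<integral>\<^sup>+\<tau>. ennreal (indicator S y * indicator T \<tau> * K y \<tau> * A \<tau> powr (1/p)) \<partial>lborel) \<partial>lborel)
      = (\<integral>\<^sup>+\<tau>. (\<integral>\<^sup>+y. ennreal (indicator S y * indicator T \<tau> * K y \<tau> * A \<tau> powr (1/p)) \<partial>lborel) \<partial>lborel)"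
    by (rule lborel_pair.Fubini'[symmetric]) measurable
  also have "\<dots> = (\<integral>\<^sup>+\<tau>. ennreal (indicator T \<tau> * A \<tau> powr (1/p)) * (\<integral>\<^sup>+y. ennreal (indicator S y * K y \<tau>) \<partial>lborel) \<partial>lborel)"
  proof (intro nn_integral_cong)
    fix \<tau> :: real
    have "(\<lambda>y. K y \<tau>) \<in> borel_measurable lborel"
      using measurable_Pair1[of "case_prod K" lborel lborel borel \<tau>] by simp
    then have "(\<integral>\<^sup>+y. ennreal (indicator T \<tau> * A \<tau> powr (1/p)) * ennreal (indicator S y * K y \<tau>) \<partial>lborel)
        = ennreal (indicator T \<tau> * A \<tau> powr (1/p)) * (\<integral>\<^sup>+y. ennreal (indicator S y * K y \<tau>) \<partial>lborel)"
      by (intro nn_integral_cmult) measurable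
    moreover have "ennreal (indicator S y * indicator T \<tau> * K y \<tau> * A \<tau> powr (1/p))
        = ennreal (indicator T \<tau> * A \<tau> powr (1/p)) * ennreal (indicator S y * K y \<tau>)" for y
      using K0[of y \<tau>] by (simp add: ennreal_mult[symmetric] mult_ac del: ennreal_mult)
    ultimately show "(\<integral>\<^sup>+y. ennreal (indicator S y * indicator T \<tau> * K y \<tau> * A \<tau> powr (1/p)) \<partial>lborel)
        = ennreal (indicator T \<tau> * A \<tau> powr (1/p)) * (\<integral>\<^sup>+y. ennreal (indicator S y * K y \<tau>) \<partial>lborel)"
      by simp
  qed
  also have "\<dots> \<le> (\<integral>\<^sup>+\<tau>. ennreal (indicator T \<tau> * (A \<tau> powr (1/p) * M \<tau>)) \<partial>lborel)"
  proof (intro nn_integral_mono)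
    fix \<tau> :: real
    show "ennreal (indicator T \<tau> * A \<tau> powr (1/p)) * (\<integral>\<^sup>+y. ennreal (indicator S y * K y \<tau>) \<partial>lborel)
        \<le> ennreal (indicator T \<tau> * (A \<tau> powr (1/p) * M \<tau>))"
    proof (cases "\<tau> \<in> T")
      case True
      then have "ennreal (A \<tau> powr (1/p)) * (\<integral>\<^sup>+y. ennreal (indicator S y * K y \<tau>) \<partial>lborel)
          \<le> ennreal (A \<tau> powr (1/p)) * ennreal (M \<tau>)"
        using mass by (intro mult_left_mono) auto
      then show ?thesis using True M0[OF True] by (simp add: ennreal_mult)
    qed simp
  qed
  finally show ?thesis .
qed

lemma nn_integral_Young_kernel:
  fixes \<phi> :: "'c::euclidean_space \<Rightarrow> real" and K :: "'c \<Rightarrow> real \<Rightarrow> real" and A M :: "real \<Rightarrow> real"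
  assumes p: "1 \<le> p"
    and \<phi>: "(\<lambda>y. indicator S y * \<bar>\<phi> y\<bar> powr p) \<in> borel_measurable lebesgue"
      "(\<integral>\<^sup>+y. ennreal (indicator S y * \<bar>\<phi> y\<bar> powr p) \<partial>lebesgue) \<le> ennreal \<Phi>" "0 \<le> \<Phi>"
    and meas [measurable]: "S \<in> sets borel" "T \<in> sets borel" "case_prod K \<in> borel_measurable borel"
      "A \<in> borel_measurable borel" "M \<in> borel_measurable borel"
    and K0: "\<And>y \<tau>. 0 \<le> K y \<tau>"
    and K: "\<And>y \<tau>. y \<in> S \<Longrightarrow> \<tau> \<in> T \<Longrightarrow> K y \<tau> \<le> A \<tau> * M \<tau>"
    and mass: "\<And>\<tau>. \<tau> \<in> T \<Longrightarrow> (\<integral>\<^sup>+y. ennreal (indicator S y * K y \<tau>) \<partial>lborel) \<le> ennreal (M \<tau>)"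
    and A: "\<And>\<tau>. \<tau> \<in> T \<Longrightarrow> 0 < A \<tau>" and M0: "\<And>\<tau>. \<tau> \<in> T \<Longrightarrow> 0 \<le> M \<tau>"
    and W: "(\<integral>\<^sup>+\<tau>. ennreal (indicator T \<tau> * (A \<tau> powr (1/p) * M \<tau>)) \<partial>lborel) \<le> ennreal w" "0 \<le> w"
  shows "(\<integral>\<^sup>+y. ennreal (indicator S y * \<bar>\<phi> y\<bar>) * (\<integral>\<^sup>+\<tau>. ennreal (indicator T \<tau> * K y \<tau>) \<partial>lborel) \<partial>lebesgue)
    \<le> ennreal ((\<Phi> / p + 1) * w)"
proof -
  have [measurable]: "case_prod K \<in> borel_measurable (lborel \<Otimes>\<^sub>M lborel)"
    unfolding lborel_prod by simp
  have K_measurable: "(\<lambda>\<tau>. K y \<tau>) \<in> borel_measurable borel" for y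
    using measurable_Pair2[of "case_prod K" lborel lborel borel y] by simp
  define b where "b y = (\<integral>\<^sup>+\<tau>. ennreal (indicator S y * indicator T \<tau> * K y \<tau> * A \<tau> powr (1/p)) \<partial>lborel)" for y
  have b_measurable: "b \<in> borel_measurable lborel"
    unfolding b_def by measurable
  have "ennreal (indicator S y * \<bar>\<phi> y\<bar>) * (\<integral>\<^sup>+\<tau>. ennreal (indicator T \<tau> * K y \<tau>) \<partial>lborel)
      \<le> ennreal (indicator S y * \<bar>\<phi> y\<bar> powr p) * ennreal (w / p) + b y" for y
  proof (cases "y \<in> S")
    case True
    have "ennreal \<bar>\<phi> y\<bar> * (\<integral>\<^sup>+\<tau>. ennreal (indicator T \<tau> * K y \<tau>) \<partial>lborel)
        \<le> ennreal (\<bar>\<phi> y\<bar> powr p / p) * (\<integral>\<^sup>+\<tau>. ennreal (indicator T \<tau> * (A \<tau> powr (1/p) * M \<tau>)) \<partial>lborel)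
          + (\<integral>\<^sup>+\<tau>. ennreal (indicator T \<tau> * K y \<tau> * A \<tau> powr (1/p)) \<partial>lborel)"
      by (rule nn_integral_mult_le_Young_kernel[OF p abs_ge_zero])
        (use True K0 K A meas K_measurable in auto)
    also have "\<dots> \<le> ennreal (\<bar>\<phi> y\<bar> powr p / p) * ennreal w + b y"
      using W True by (intro add_mono mult_left_mono) (auto simp: b_def)
    also have "ennreal (\<bar>\<phi> y\<bar> powr p / p) * ennreal w = ennreal (\<bar>\<phi> y\<bar> powr p) * ennreal (w / p)"
      using p W(2) by (simp add: ennreal_mult[symmetric] del: ennreal_mult)
    finally show ?thesis using True by simp
  qed simp
  then have "(\<integral>\<^sup>+y. ennreal (indicator S y * \<bar>\<phi> y\<bar>) * (\<integral>\<^sup>+\<tau>. ennreal (indicator T \<tau> * K y \<tau>) \<partial>lborel) \<partial>lebesgue)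
      \<le> (\<integral>\<^sup>+y. ennreal (indicator S y * \<bar>\<phi> y\<bar> powr p) * ennreal (w / p) + b y \<partial>lebesgue)"
    by (intro nn_integral_mono)
  also have "\<dots> = (\<integral>\<^sup>+y. ennreal (indicator S y * \<bar>\<phi> y\<bar> powr p) \<partial>lebesgue) * ennreal (w / p)
      + (\<integral>\<^sup>+y. b y \<partial>lebesgue)"
    using \<phi>(1) measurable_completion[OF b_measurable] by (simp add: nn_integral_add nn_integral_multc)
  also have "\<dots> \<le> ennreal \<Phi> * ennreal (w / p) + ennreal w"
  proof (intro add_mono mult_right_mono \<phi>(2))
    show "(\<integral>\<^sup>+y. b y \<partial>lebesgue) \<le> ennreal w"
      using order_trans[OF nn_integral_kernel_mass_le[OF meas(1-4) mass K0 M0, of p] W(1)]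
      unfolding nn_integral_completion b_def by simp
  qed simp
  also have "\<dots> = ennreal ((\<Phi> / p + 1) * w)"
  proof -
    have "ennreal \<Phi> * ennreal (w / p) = ennreal (\<Phi> / p * w)"
      using p \<phi>(3) W(2) by (subst ennreal_mult[symmetric]) auto
    moreover have e: "(\<Phi> / p + 1) * w = \<Phi> / p * w + w" by (simp add: algebra_simps)
    moreover have "0 \<le> \<Phi> / p * w" using p \<phi>(3) W(2) by simp
    ultimately show ?thesis using W(2) by (simp only: e ennreal_plus)
  qed
  finally show ?thesis .
qed

(* A single kernel, viewed as a family that is constant on a unit interval. *)
lemma nn_integral_Young_kernel_single:
  fixes \<phi> K :: "'c::euclidean_space \<Rightarrow> real"
  assumes p: "1 \<le> p"
    and \<phi>: "(\<lambda>y. indicator S y * \<bar>\<phi> y\<bar> powr p) \<in> borel_measurable lebesgue"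
      "(\<integral>\<^sup>+y. ennreal (indicator S y * \<bar>\<phi> y\<bar> powr p) \<partial>lebesgue) \<le> ennreal \<Phi>" "0 \<le> \<Phi>"
    and [measurable]: "S \<in> sets borel" "K \<in> borel_measurable borel"
    and K0: "\<And>y. 0 \<le> K y" and K: "\<And>y. y \<in> S \<Longrightarrow> K y \<le> A * M"
    and mass: "(\<integral>\<^sup>+y. ennreal (indicator S y * K y) \<partial>lborel) \<le> ennreal M"
    and A: "0 < A" and M0: "0 \<le> M"
  shows "(\<integral>\<^sup>+y. ennreal (indicator S y * \<bar>\<phi> y\<bar>) * ennreal (K y) \<partial>lebesgue)
    \<le> ennreal ((\<Phi> / p + 1) * (A powr (1/p) * M))"
proof -
  have unit: "(\<integral>\<^sup>+\<tau>. ennreal (indicator {0..1::real} \<tau> * c) \<partial>lborel) = ennreal c" if "0 \<le> c" for c :: real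
  proof -
    have "(\<integral>\<^sup>+\<tau>. ennreal (indicator {0..1::real} \<tau> * c) \<partial>lborel) = (\<integral>\<^sup>+\<tau>. ennreal c * indicator {0..1::real} \<tau> \<partial>lborel)"
      by (intro nn_integral_cong) (simp split: split_indicator)
    also have "\<dots> = ennreal c" by (simp add: nn_integral_cmult_indicator)
    finally show ?thesis .
  qed
  have "(\<lambda>z. K (fst z)) \<in> borel_measurable (borel \<Otimes>\<^sub>M (borel :: real measure))" by measurable
  then have "(\<lambda>(y, \<tau>::real). K y) \<in> borel_measurable borel"
    unfolding borel_prod by (simp add: case_prod_beta')
  then have "(\<integral>\<^sup>+y. ennreal (indicator S y * \<bar>\<phi> y\<bar>) * (\<integral>\<^sup>+\<tau>. ennreal (indicator {0..1::real} \<tau> * K y) \<partial>lborel) \<partial>lebesgue)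
      \<le> ennreal ((\<Phi> / p + 1) * (A powr (1/p) * M))"
    by (intro nn_integral_Young_kernel[where K="\<lambda>y \<tau>. K y" and A="\<lambda>_. A" and M="\<lambda>_. M" and T="{0..1::real}"])
       (use assms unit in auto)
  then show ?thesis using K0 unit by simp
qed

section \<open>The boundary correction of \<open>\<Psi>\<close>\<close>

lemma Omega_iff: "y \<in> Omega \<longleftrightarrow> 0 < snd y"
  by (cases y) (simp add: Omega_def)

lemma closure_Omega: "closure (Omega :: ('a::euclidean_space \<times> real) set) = UNIV \<times> {0..}"
  by (simp add: Omega_def closure_Times)

lemma Omega_sets [measurable]: "(Omega :: ('a::euclidean_space \<times> real) set) \<in> sets borel"
  unfolding Omega_def by (intro borel_Times) auto

lemma G0_measurable: "(\<lambda>y. G0 x y s) \<in> borel_measurable lborel"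
  unfolding G0_def reflN_def by measurable

lemma abs_G0_le:
  fixes x y :: "'a::euclidean_space \<times> real"
  assumes "0 \<le> snd x" "0 \<le> snd y" "0 < s"
  shows "\<bar>G0 x y s\<bar> \<le> heat (x - y) s"
  using heat_reflN_le[OF assms] heat_nonneg[of "x - reflN y" s] by (simp add: G0_def)

lemma abs_GN_le:
  fixes x y :: "'a::euclidean_space \<times> real"
  assumes "0 \<le> snd x" "0 \<le> snd y" "0 < s"
  shows "\<bar>GN x y s\<bar> \<le> 2 * heat (x - y) s"
  using heat_reflN_le[OF assms] heat_nonneg[of "x - y" s] heat_nonneg[of "x - reflN y" s]
  by (simp add: GN_def)

definition Psi_corr :: "real \<Rightarrow> 'a::euclidean_space \<times> real \<Rightarrow> 'a \<times> real \<Rightarrow> real \<Rightarrow> real" where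
  "Psi_corr k x y \<sigma> = (LBINT \<tau>:{0<..}. heat (fst x - fst y) (\<sigma> + k * \<tau>) * dheat1 (snd x + snd y + \<tau>) \<sigma>)"

lemma Psi_eq: "Psi \<epsilon> k x y t = G0 x y (t / \<epsilon>) - 2 * Psi_corr k x y (t / \<epsilon>)"
  by (simp add: Psi_def Psi_corr_def)

lemma Psi_corr_measurable:
  fixes x :: "'a::euclidean_space \<times> real"
  assumes "0 < \<sigma>"
  shows "(\<lambda>y. Psi_corr k x y \<sigma>) \<in> borel_measurable lborel"
proof -
  have "(\<lambda>y. Psi_corr k x y \<sigma>) = (\<lambda>y. \<integral>\<tau>. indicator {0<..} \<tau> *\<^sub>R (heat (fst x - fst y) (\<sigma> + k * \<tau>)
      * (- ((snd x + snd y + \<tau>) / (2 * \<sigma>)) * heat (snd x + snd y + \<tau>) \<sigma>)) \<partial>lborel)"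
    unfolding Psi_corr_def set_lebesgue_integral_def using dheat1_eq[OF assms] by simp
  also have "\<dots> \<in> borel_measurable lborel" by measurable
  finally show ?thesis .
qed

(* corr_kernel majorizes the integrand of Psi_corr; as a function of y it has mass at most
   corr_mass and height at most corr_sup * corr_mass. *)
definition corr_kernel :: "real \<Rightarrow> 'a::euclidean_space \<times> real \<Rightarrow> real \<Rightarrow> 'a \<times> real \<Rightarrow> real \<Rightarrow> real" where
  "corr_kernel k x \<sigma> y \<tau> = heat (fst x - fst y) (\<sigma> + k * \<tau>) * dheat1_majorant (snd x + snd y + \<tau>) \<sigma>"

definition corr_sup :: "real \<Rightarrow> real \<Rightarrow> real \<Rightarrow> real \<Rightarrow> real" where
  "corr_sup D k \<sigma> \<tau> = (4 * pi * (\<sigma> + k * \<tau>)) powr (- D / 2) * (8 * pi * \<sigma>) powr (-1/2)"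

definition corr_mass :: "real \<Rightarrow> real \<Rightarrow> real \<Rightarrow> real" where
  "corr_mass \<sigma> \<xi> \<tau> = sqrt 2 * \<sigma> powr (-1/2) * exp (- ((\<xi> + \<tau>)^2) / (8 * \<sigma>))"

definition corr_bound :: "real \<Rightarrow> real \<Rightarrow> real \<Rightarrow> real \<Rightarrow> real \<Rightarrow> ennreal" where
  "corr_bound D p k \<sigma> \<xi> =
     (\<integral>\<^sup>+\<tau>. ennreal (indicator {0<..} \<tau> * (corr_sup D k \<sigma> \<tau> powr (1/p) * corr_mass \<sigma> \<xi> \<tau>)) \<partial>lborel)"

lemma corr_sup_measurable [measurable]: "corr_sup D k \<sigma> \<in> borel_measurable borel"
  unfolding corr_sup_def[abs_def] by measurable

lemma corr_mass_measurable [measurable]: "corr_mass \<sigma> \<xi> \<in> borel_measurable borel"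
  unfolding corr_mass_def[abs_def] by measurable

lemma corr_sup_pos:
  assumes "0 < \<sigma>" "0 \<le> k" "0 \<le> \<tau>"
  shows "0 < corr_sup D k \<sigma> \<tau>"
proof -
  have "0 < \<sigma> + k * \<tau>" using assms by (simp add: add_pos_nonneg)
  then show ?thesis using assms(1) by (simp add: corr_sup_def)
qed

lemma corr_mass_nonneg: "0 \<le> corr_mass \<sigma> \<xi> \<tau>"
  by (simp add: corr_mass_def)

lemma corr_kernel_nonneg: "0 < \<sigma> \<Longrightarrow> 0 \<le> corr_kernel k x \<sigma> y \<tau>"
  by (simp add: corr_kernel_def heat_nonneg dheat1_majorant_nonneg)

lemma corr_kernel_measurable:
  fixes x :: "'a::euclidean_space \<times> real"
  shows "(\<lambda>(y, \<tau>). corr_kernel k x \<sigma> y \<tau>) \<in> borel_measurable borel"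
  unfolding corr_kernel_def case_prod_beta' by measurable

lemma abs_Psi_corr_le:
  assumes "0 < \<sigma>"
  shows "ennreal \<bar>Psi_corr k x y \<sigma>\<bar> \<le> (\<integral>\<^sup>+\<tau>. ennreal (indicator {0<..} \<tau> * corr_kernel k x \<sigma> y \<tau>) \<partial>lborel)"
proof -
  have "ennreal \<bar>Psi_corr k x y \<sigma>\<bar> \<le> (\<integral>\<^sup>+\<tau>. ennreal \<bar>indicator {0<..} \<tau> *\<^sub>R
      (heat (fst x - fst y) (\<sigma> + k * \<tau>) * dheat1 (snd x + snd y + \<tau>) \<sigma>)\<bar> \<partial>lborel)"
    unfolding Psi_corr_def set_lebesgue_integral_def by (rule abs_integral_le_nn_integral)
  also have "\<dots> \<le> (\<integral>\<^sup>+\<tau>. ennreal (indicator {0<..} \<tau> * corr_kernel k x \<sigma> y \<tau>) \<partial>lborel)"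
  proof (intro nn_integral_mono ennreal_leI)
    fix \<tau> :: real
    have "heat (fst x - fst y) (\<sigma> + k * \<tau>) * \<bar>dheat1 (snd x + snd y + \<tau>) \<sigma>\<bar> \<le> corr_kernel k x \<sigma> y \<tau>"
      unfolding corr_kernel_def using abs_dheat1_le[OF assms] by (intro mult_left_mono heat_nonneg)
    then show "\<bar>indicator {0<..} \<tau> *\<^sub>R (heat (fst x - fst y) (\<sigma> + k * \<tau>) * dheat1 (snd x + snd y + \<tau>) \<sigma>)\<bar>
        \<le> indicator {0<..} \<tau> * corr_kernel k x \<sigma> y \<tau>"
      by (simp add: abs_mult heat_nonneg split: split_indicator)
  qed
  finally show ?thesis .
qed

lemma corr_kernel_le:
  fixes x y :: "'a::euclidean_space \<times> real"
  assumes x: "0 \<le> snd x" and y: "0 < snd y" and \<sigma>: "0 < \<sigma>" and k: "0 \<le> k" and \<tau>: "0 < \<tau>"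
  shows "corr_kernel k x \<sigma> y \<tau> \<le> corr_sup (real DIM('a)) k \<sigma> \<tau> * corr_mass \<sigma> (snd x) \<tau>"
proof -
  have s: "0 < \<sigma> + k * \<tau>" using \<sigma> k \<tau> by (simp add: add_pos_nonneg)
  have "dheat1_majorant ((snd x + \<tau>) + snd y) \<sigma>
      \<le> sqrt 2 * \<sigma> powr (-1/2) * exp (- ((snd x + \<tau>)^2) / (8 * \<sigma>)) * heat (snd y) (2 * \<sigma>)"
    using x y \<tau> \<sigma> by (intro dheat1_majorant_shift_le) auto
  also have "\<dots> \<le> corr_mass \<sigma> (snd x) \<tau> * (8 * pi * \<sigma>) powr (-1/2)"
    unfolding corr_mass_def using heat_real_double_le[OF \<sigma>] by (intro mult_left_mono) auto
  finally have "dheat1_majorant (snd x + snd y + \<tau>) \<sigma> \<le> corr_mass \<sigma> (snd x) \<tau> * (8 * pi * \<sigma>) powr (-1/2)"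
    by (simp add: add_ac)
  then have "corr_kernel k x \<sigma> y \<tau>
      \<le> (4 * pi * (\<sigma> + k * \<tau>)) powr (- real DIM('a) / 2) * (corr_mass \<sigma> (snd x) \<tau> * (8 * pi * \<sigma>) powr (-1/2))"
    unfolding corr_kernel_def using heat_le[OF s, of "fst x - fst y"] \<sigma>
    by (intro mult_mono) (auto simp: dheat1_majorant_nonneg)
  then show ?thesis by (simp add: corr_sup_def mult_ac)
qed

lemma nn_integral_corr_kernel_le:
  fixes x :: "'a::euclidean_space \<times> real"
  assumes x: "0 \<le> snd x" and \<sigma>: "0 < \<sigma>" and s: "0 < \<sigma> + k * \<tau>" and \<tau>: "0 \<le> \<tau>"
  shows "(\<integral>\<^sup>+y. ennreal (indicator Omega y * corr_kernel k x \<sigma> y \<tau>) \<partial>lborel) \<le> ennreal (corr_mass \<sigma> (snd x) \<tau>)"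
proof -
  let ?M = "corr_mass \<sigma> (snd x) \<tau>"
  have "(\<integral>\<^sup>+y. ennreal (indicator Omega y * corr_kernel k x \<sigma> y \<tau>) \<partial>lborel)
      \<le> (\<integral>\<^sup>+y. ennreal (heat (fst x - fst y) (\<sigma> + k * \<tau>)) * (ennreal ?M * ennreal (heat (snd y :: real) (2 * \<sigma>))) \<partial>lborel)"
  proof (intro nn_integral_mono)
    fix y :: "'a \<times> real"
    show "ennreal (indicator Omega y * corr_kernel k x \<sigma> y \<tau>)
        \<le> ennreal (heat (fst x - fst y) (\<sigma> + k * \<tau>)) * (ennreal ?M * ennreal (heat (snd y) (2 * \<sigma>)))"
    proof (cases "y \<in> Omega")
      case True
      have "dheat1_majorant (snd x + snd y + \<tau>) \<sigma> \<le> ?M * heat (snd y) (2 * \<sigma>)"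
        using dheat1_majorant_shift_le[of "snd x + \<tau>" "snd y" \<sigma>] x \<tau> \<sigma> True
        by (simp add: Omega_iff corr_mass_def add_ac)
      then have "corr_kernel k x \<sigma> y \<tau> \<le> heat (fst x - fst y) (\<sigma> + k * \<tau>) * (?M * heat (snd y) (2 * \<sigma>))"
        unfolding corr_kernel_def by (rule mult_left_mono) (rule heat_nonneg)
      then show ?thesis
        using True by (simp add: ennreal_mult[symmetric] heat_nonneg corr_mass_nonneg ennreal_leI del: ennreal_mult)
    qed simp
  qed
  also have "\<dots> = (\<integral>\<^sup>+y'. (\<integral>\<^sup>+y\<^sub>N. ennreal (heat (fst x - y') (\<sigma> + k * \<tau>))
      * (ennreal ?M * ennreal (heat (y\<^sub>N::real) (2 * \<sigma>))) \<partial>lborel) \<partial>lborel)"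
    by (subst nn_integral_lborel_pair) measurable
  also have "\<dots> = (\<integral>\<^sup>+y'. ennreal ?M * ennreal (heat (fst x - y') (\<sigma> + k * \<tau>)) \<partial>lborel)"
    using nn_integral_heat[of "2 * \<sigma>" "0::real"] \<sigma> by (simp add: nn_integral_cmult mult.commute)
  also have "\<dots> = ennreal ?M"
    using nn_integral_heat'[OF s, of "fst x"] by (simp add: nn_integral_cmult)
  finally show ?thesis .
qed

definition zcorr :: "real \<Rightarrow> ('a::euclidean_space \<times> real \<Rightarrow> real) \<Rightarrow> 'a \<times> real \<Rightarrow> real \<Rightarrow> real" where
  "zcorr k \<phi> x \<sigma> = (LINT y:Omega|lebesgue. Psi_corr k x y \<sigma> * \<phi> y)"

locale Lp_datum =
  fixes \<phi> :: "'a::euclidean_space \<times> real \<Rightarrow> real" and p :: real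
  assumes p: "1 \<le> p"
    and meas: "set_borel_measurable lebesgue Omega \<phi>"
    and Lp: "set_integrable lebesgue Omega (\<lambda>y. \<bar>\<phi> y\<bar> powr p)"
begin

definition Lp_mass :: real where
  "Lp_mass = (LINT y:Omega|lebesgue. \<bar>\<phi> y\<bar> powr p)"

lemma Lp_mass_nonneg: "0 \<le> Lp_mass"
  unfolding Lp_mass_def set_lebesgue_integral_def by (rule integral_nonneg_AE) simp

lemma phi_powr_measurable: "(\<lambda>y. indicator Omega y * \<bar>\<phi> y\<bar> powr p) \<in> borel_measurable lebesgue"
  using Lp unfolding set_integrable_def by (intro borel_measurable_integrable) simp

lemma nn_integral_phi_powr: "(\<integral>\<^sup>+y. ennreal (indicator Omega y * \<bar>\<phi> y\<bar> powr p) \<partial>lebesgue) = ennreal Lp_mass"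
  using Lp unfolding Lp_mass_def set_integrable_def set_lebesgue_integral_def
  by (subst nn_integral_eq_integral) auto

lemmas Lp_facts = p phi_powr_measurable nn_integral_phi_powr[THEN eq_refl] Lp_mass_nonneg

lemma nn_integral_heat_kernel_le:
  fixes x :: "'a \<times> real"
  assumes s: "0 < s" and c: "0 < c"
  shows "(\<integral>\<^sup>+y. ennreal (indicator Omega y * \<bar>\<phi> y\<bar>) * ennreal (c * heat (x - y) s) \<partial>lebesgue)
    \<le> ennreal ((Lp_mass / p + 1) * (((4 * pi * s) powr (- real DIM('a \<times> real) / 2)) powr (1/p) * c))"
proof (rule nn_integral_Young_kernel_single[OF Lp_facts])
  show "(\<lambda>y. c * heat (x - y) s) \<in> borel_measurable borel" by measurable
  show "c * heat (x - y) s \<le> (4 * pi * s) powr (- real DIM('a \<times> real) / 2) * c" for y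
    using heat_le[OF s, of "x - y"] c by (simp add: mult.commute)
  have "(\<integral>\<^sup>+y. ennreal (indicator Omega y * (c * heat (x - y) s)) \<partial>lborel)
      \<le> (\<integral>\<^sup>+y. ennreal c * ennreal (heat (x - y) s) \<partial>lborel)"
    using c by (intro nn_integral_mono)
      (auto simp: ennreal_mult[symmetric] heat_nonneg split: split_indicator simp del: ennreal_mult)
  also have "\<dots> = ennreal c * (\<integral>\<^sup>+y. ennreal (heat (x - y) s) \<partial>lborel)"
    by (rule nn_integral_cmult) measurable
  also have "\<dots> = ennreal c" using nn_integral_heat'[OF s, of x] by simp
  finally show "(\<integral>\<^sup>+y. ennreal (indicator Omega y * (c * heat (x - y) s)) \<partial>lborel) \<le> ennreal c" .
qed (use c s in \<open>auto simp: heat_nonneg\<close>)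

lemma abs_zN_le:
  assumes x: "0 \<le> snd x" and s: "0 < t / \<epsilon>"
  shows "\<bar>zN \<epsilon> \<phi> x t\<bar> \<le> (Lp_mass / p + 1) * (((4 * pi * (t / \<epsilon>)) powr (- real DIM('a \<times> real) / 2)) powr (1/p) * 2)"
  unfolding zN_def
proof (rule abs_set_integral_le_nn_integral)
  have "(\<integral>\<^sup>+y. ennreal \<bar>indicator Omega y *\<^sub>R (GN x y (t / \<epsilon>) * \<phi> y)\<bar> \<partial>lebesgue)
      \<le> (\<integral>\<^sup>+y. ennreal (indicator Omega y * \<bar>\<phi> y\<bar>) * ennreal (2 * heat (x - y) (t / \<epsilon>)) \<partial>lebesgue)"
    by (rule nn_integral_kernel_le, rule abs_GN_le[OF x _ s]) (auto simp: Omega_iff)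
  then show "(\<integral>\<^sup>+y. ennreal \<bar>indicator Omega y *\<^sub>R (GN x y (t / \<epsilon>) * \<phi> y)\<bar> \<partial>lebesgue)
      \<le> ennreal ((Lp_mass / p + 1) * (((4 * pi * (t / \<epsilon>)) powr (- real DIM('a \<times> real) / 2)) powr (1/p) * 2))"
    by (rule order_trans[OF _ nn_integral_heat_kernel_le[OF s]]) simp
qed (use p Lp_mass_nonneg in simp)

lemma nn_integral_G0_le:
  assumes x: "0 \<le> snd x" and s: "0 < t / \<epsilon>"
  shows "(\<integral>\<^sup>+y. ennreal \<bar>indicator Omega y *\<^sub>R (G0 x y (t / \<epsilon>) * \<phi> y)\<bar> \<partial>lebesgue)
    \<le> ennreal ((Lp_mass / p + 1) * (((4 * pi * (t / \<epsilon>)) powr (- real DIM('a \<times> real) / 2)) powr (1/p) * 1))"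
proof -
  have "(\<integral>\<^sup>+y. ennreal \<bar>indicator Omega y *\<^sub>R (G0 x y (t / \<epsilon>) * \<phi> y)\<bar> \<partial>lebesgue)
      \<le> (\<integral>\<^sup>+y. ennreal (indicator Omega y * \<bar>\<phi> y\<bar>) * ennreal (1 * heat (x - y) (t / \<epsilon>)) \<partial>lebesgue)"
    by (rule nn_integral_kernel_le) (use abs_G0_le[OF x _ s] in \<open>force simp: Omega_iff\<close>)
  then show ?thesis
    by (rule order_trans[OF _ nn_integral_heat_kernel_le[OF s]]) simp
qed

lemma abs_zD_le:
  assumes "0 \<le> snd x" "0 < t / \<epsilon>"
  shows "\<bar>zD \<epsilon> \<phi> x t\<bar> \<le> (Lp_mass / p + 1) * (((4 * pi * (t / \<epsilon>)) powr (- real DIM('a \<times> real) / 2)) powr (1/p) * 1)"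
  unfolding zD_def using nn_integral_G0_le[OF assms] p Lp_mass_nonneg
  by (intro abs_set_integral_le_nn_integral) simp_all

lemma nn_integral_Psi_corr_le:
  assumes x: "0 \<le> snd x" and \<sigma>: "0 < \<sigma>" and k: "0 \<le> k"
    and w: "corr_bound (real DIM('a)) p k \<sigma> (snd x) \<le> ennreal w" "0 \<le> w"
  shows "(\<integral>\<^sup>+y. ennreal \<bar>indicator Omega y *\<^sub>R (Psi_corr k x y \<sigma> * \<phi> y)\<bar> \<partial>lebesgue)
    \<le> ennreal ((Lp_mass / p + 1) * w)"
proof -
  have "(\<integral>\<^sup>+y. ennreal \<bar>indicator Omega y *\<^sub>R (Psi_corr k x y \<sigma> * \<phi> y)\<bar> \<partial>lebesgue)
      \<le> (\<integral>\<^sup>+y. ennreal (indicator Omega y * \<bar>\<phi> y\<bar>) *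
           (\<integral>\<^sup>+\<tau>. ennreal (indicator {0<..} \<tau> * corr_kernel k x \<sigma> y \<tau>) \<partial>lborel) \<partial>lebesgue)"
  proof (intro nn_integral_mono)
    fix y :: "'a \<times> real"
    have "ennreal \<bar>indicator Omega y *\<^sub>R (Psi_corr k x y \<sigma> * \<phi> y)\<bar>
        = ennreal (indicator Omega y * \<bar>\<phi> y\<bar>) * ennreal \<bar>Psi_corr k x y \<sigma>\<bar>"
      by (simp add: abs_mult ennreal_mult[symmetric] mult_ac del: ennreal_mult)
    also have "\<dots> \<le> ennreal (indicator Omega y * \<bar>\<phi> y\<bar>) *
        (\<integral>\<^sup>+\<tau>. ennreal (indicator {0<..} \<tau> * corr_kernel k x \<sigma> y \<tau>) \<partial>lborel)"
      by (intro mult_left_mono abs_Psi_corr_le \<sigma>) simp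
    finally show "ennreal \<bar>indicator Omega y *\<^sub>R (Psi_corr k x y \<sigma> * \<phi> y)\<bar> \<le> \<dots>" .
  qed
  also have "\<dots> \<le> ennreal ((Lp_mass / p + 1) * w)"
  proof (rule nn_integral_Young_kernel[OF Lp_facts, where A = "corr_sup (real DIM('a)) k \<sigma>"
        and M = "corr_mass \<sigma> (snd x)"])
    show "(\<integral>\<^sup>+\<tau>. ennreal (indicator {0<..} \<tau> * (corr_sup (real DIM('a)) k \<sigma> \<tau> powr (1/p)
        * corr_mass \<sigma> (snd x) \<tau>)) \<partial>lborel) \<le> ennreal w"
      using w(1) by (simp add: corr_bound_def)
    show "(\<lambda>(y, \<tau>). corr_kernel k x \<sigma> y \<tau>) \<in> borel_measurable borel"
      by (rule corr_kernel_measurable)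
    show "0 \<le> corr_kernel k x \<sigma> y \<tau>" for y \<tau>
      using \<sigma> by (rule corr_kernel_nonneg)
    show "corr_kernel k x \<sigma> y \<tau> \<le> corr_sup (real DIM('a)) k \<sigma> \<tau> * corr_mass \<sigma> (snd x) \<tau>"
      if "y \<in> Omega" "\<tau> \<in> {0<..}" for y \<tau>
      using that x \<sigma> k by (intro corr_kernel_le) (auto simp: Omega_iff)
    show "(\<integral>\<^sup>+y. ennreal (indicator Omega y * corr_kernel k x \<sigma> y \<tau>) \<partial>lborel) \<le> ennreal (corr_mass \<sigma> (snd x) \<tau>)"
      if "\<tau> \<in> {0<..}" for \<tau>
      using that x \<sigma> k by (intro nn_integral_corr_kernel_le) (auto simp: add_pos_nonneg)
    show "0 < corr_sup (real DIM('a)) k \<sigma> \<tau>" if "\<tau> \<in> {0<..}" for \<tau>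
      using that \<sigma> k by (intro corr_sup_pos) auto
  qed (use w(2) in \<open>auto simp: corr_mass_nonneg\<close>)
  finally show ?thesis .
qed

lemma zek_eq:
  assumes x: "0 \<le> snd x" and \<sigma>: "0 < t / \<epsilon>" and k: "0 \<le> k"
    and w: "corr_bound (real DIM('a)) p k (t / \<epsilon>) (snd x) \<le> ennreal w" "0 \<le> w"
  shows "zek \<epsilon> k \<phi> x t = zD \<epsilon> \<phi> x t - 2 * zcorr k \<phi> x (t / \<epsilon>)"
proof -
  have "set_integrable lebesgue Omega (\<lambda>y. G0 x y (t / \<epsilon>) * \<phi> y)"
    by (rule set_integrable_mult_bounded[OF meas G0_measurable nn_integral_G0_le[OF x \<sigma>]])
  moreover have "set_integrable lebesgue Omega (\<lambda>y. 2 * (Psi_corr k x y (t / \<epsilon>) * \<phi> y))"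
    using set_integrable_mult_bounded[OF meas Psi_corr_measurable[OF \<sigma>] nn_integral_Psi_corr_le[OF x \<sigma> k w]]
    by simp
  ultimately show ?thesis
    unfolding zek_def zD_def zcorr_def Psi_eq left_diff_distrib mult.assoc
    by (simp add: set_integral_diff)
qed

lemma abs_zcorr_le:
  assumes x: "0 \<le> snd x" and \<sigma>: "0 < \<sigma>" and k: "0 \<le> k"
    and w: "corr_bound (real DIM('a)) p k \<sigma> (snd x) \<le> ennreal w" "0 \<le> w"
  shows "\<bar>zcorr k \<phi> x \<sigma>\<bar> \<le> (Lp_mass / p + 1) * w"
  unfolding zcorr_def using nn_integral_Psi_corr_le[OF x \<sigma> k w] p Lp_mass_nonneg w(2)
  by (intro abs_set_integral_le_nn_integral) simp_all

end

section \<open>Scaling in \<open>\<epsilon>\<close>\<close>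

lemma powr_time_scaled_le:
  fixes a r T \<epsilon> t :: real
  assumes a: "0 < a" and r: "0 \<le> r" and T: "0 < T" and \<epsilon>: "0 < \<epsilon>" and t: "T < t"
  shows "(a * (t / \<epsilon>)) powr (- r) \<le> (a * T) powr (- r) * \<epsilon> powr r"
proof -
  have "(a * (t / \<epsilon>)) powr (- r) \<le> (a * (T / \<epsilon>)) powr (- r)"
    using a r T \<epsilon> t by (intro powr_mono2') (auto intro: mult_left_mono divide_right_mono)
  also have "\<dots> = (a * T) powr (- r) * \<epsilon> powr r"
  proof -
    have "(a * (T / \<epsilon>)) powr (- r) = inverse ((a * T) powr r / \<epsilon> powr r)"
      using a T \<epsilon> by (simp add: powr_minus powr_divide)
    also have "\<dots> = inverse ((a * T) powr r) * \<epsilon> powr r"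
      by (simp add: divide_inverse)
    finally show ?thesis by (simp add: powr_minus)
  qed
  finally show ?thesis .
qed

lemma heat_sup_powr_scaled_le:
  assumes p: "1 \<le> p" and n: "0 \<le> n" and T: "0 < T" and \<epsilon>: "0 < \<epsilon>" and t: "T < t"
  shows "((4 * pi * (t / \<epsilon>)) powr (- n / 2)) powr (1/p)
    \<le> ((4 * pi * T) powr (- n / 2)) powr (1/p) * \<epsilon> powr (n / (2 * p))"
proof -
  have "((4 * pi * (t / \<epsilon>)) powr (- n / 2)) powr (1/p) = (4 * pi * (t / \<epsilon>)) powr (- (n / (2 * p)))"
    by (simp add: powr_powr)
  also have "\<dots> \<le> (4 * pi * T) powr (- (n / (2 * p))) * \<epsilon> powr (n / (2 * p))"
    using assms by (intro powr_time_scaled_le) auto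
  also have "(4 * pi * T) powr (- (n / (2 * p))) = ((4 * pi * T) powr (- n / 2)) powr (1/p)"
    by (simp add: powr_powr)
  finally show ?thesis .
qed

lemma corr_sup_powr_eq:
  assumes "0 < \<sigma>"
  shows "corr_sup D k \<sigma> 0 powr (1/p) = (4 * pi * \<sigma>) powr (- (D / (2 * p))) * (8 * pi * \<sigma>) powr (- (1 / (2 * p)))"
  using assms by (simp add: corr_sup_def powr_mult powr_powr)

lemma corr_sup_powr_scaled_le:
  assumes p: "1 \<le> p" and D: "0 \<le> D" and T: "0 < T" and \<epsilon>: "0 < \<epsilon>" and t: "T < t"
  shows "corr_sup D k (t / \<epsilon>) 0 powr (1/p) \<le> corr_sup D k T 0 powr (1/p) * \<epsilon> powr ((D + 1) / (2 * p))"
proof -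
  have \<sigma>: "0 < t / \<epsilon>" using T \<epsilon> t by simp
  have "corr_sup D k (t / \<epsilon>) 0 powr (1/p)
      \<le> ((4 * pi * T) powr (- (D / (2 * p))) * \<epsilon> powr (D / (2 * p)))
        * ((8 * pi * T) powr (- (1 / (2 * p))) * \<epsilon> powr (1 / (2 * p)))"
    unfolding corr_sup_powr_eq[OF \<sigma>] using assms
    by (intro mult_mono powr_time_scaled_le) auto
  also have "\<dots> = corr_sup D k T 0 powr (1/p) * (\<epsilon> powr (D / (2 * p)) * \<epsilon> powr (1 / (2 * p)))"
    unfolding corr_sup_powr_eq[OF T] by (simp only: mult_ac)
  also have "\<epsilon> powr (D / (2 * p)) * \<epsilon> powr (1 / (2 * p)) = \<epsilon> powr ((D + 1) / (2 * p))"
    by (simp add: powr_add[symmetric] add_divide_distrib)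
  finally show ?thesis .
qed

lemma corr_mass_le_heat:
  assumes "0 < \<sigma>" "0 \<le> \<xi>" "0 \<le> \<tau>"
  shows "corr_mass \<sigma> \<xi> \<tau> \<le> 4 * sqrt pi * heat \<tau> (2 * \<sigma>)"
proof -
  have "exp (- ((\<xi> + \<tau>)^2) / (8 * \<sigma>)) \<le> exp (- (\<tau>^2) / (8 * \<sigma>))"
    using assms by (simp add: divide_right_mono power_mono)
  also have "\<dots> = (8 * pi * \<sigma>) powr (1/2) * heat \<tau> (2 * \<sigma>)"
    by (rule exp_eq_heat[OF assms(1)])
  finally have "corr_mass \<sigma> \<xi> \<tau> \<le> sqrt 2 * \<sigma> powr (-1/2) * (8 * pi * \<sigma>) powr (1/2) * heat \<tau> (2 * \<sigma>)"
    unfolding corr_mass_def by (simp add: mult_left_mono mult.assoc)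
  also have "sqrt 2 * \<sigma> powr (-1/2) * (8 * pi * \<sigma>) powr (1/2) = sqrt 2 * (8 * pi) powr (1/2)"
  proof -
    have e1: "(8 * pi * \<sigma>) powr (1/2) = (8 * pi) powr (1/2) * \<sigma> powr (1/2)"
      using assms(1) by (simp add: powr_mult)
    have e2: "\<sigma> powr (-1/2) * \<sigma> powr (1/2) = 1"
      using assms(1) by (simp add: powr_add[symmetric])
    have "sqrt 2 * \<sigma> powr (-1/2) * (8 * pi * \<sigma>) powr (1/2)
        = sqrt 2 * (8 * pi) powr (1/2) * (\<sigma> powr (-1/2) * \<sigma> powr (1/2))"
      unfolding e1 by (simp only: mult_ac)
    then show ?thesis unfolding e2 by simp
  qed
  also have "sqrt 2 * (8 * pi) powr (1/2) = sqrt (4^2 * pi)"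
    by (simp add: powr_half_sqrt real_sqrt_mult[symmetric])
  also have "\<dots> = 4 * sqrt pi"
    by (simp only: real_sqrt_mult real_sqrt_abs)
  finally show ?thesis .
qed

(* corr_sup D k \<sigma> \<tau> is largest at \<tau> = 0, so the Gaussian mass alone bounds corr_bound,
   uniformly in k >= 0. *)
lemma corr_bound_le:
  assumes \<sigma>: "0 < \<sigma>" and k: "0 \<le> k" and p: "1 \<le> p" and \<xi>: "0 \<le> \<xi>" and D: "0 \<le> D"
  shows "corr_bound D p k \<sigma> \<xi> \<le> ennreal (corr_sup D k \<sigma> 0 powr (1/p) * (4 * sqrt pi))"
proof -
  let ?c = "corr_sup D k \<sigma> 0 powr (1/p) * (4 * sqrt pi)"
  have "corr_bound D p k \<sigma> \<xi> \<le> (\<integral>\<^sup>+\<tau>. ennreal ?c * ennreal (heat (\<tau>::real) (2 * \<sigma>)) \<partial>lborel)"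
    unfolding corr_bound_def
  proof (intro nn_integral_mono)
    fix \<tau> :: real
    show "ennreal (indicator {0<..} \<tau> * (corr_sup D k \<sigma> \<tau> powr (1/p) * corr_mass \<sigma> \<xi> \<tau>))
        \<le> ennreal ?c * ennreal (heat \<tau> (2 * \<sigma>))"
    proof (cases "0 < \<tau>")
      case True
      have "corr_sup D k \<sigma> \<tau> \<le> corr_sup D k \<sigma> 0"
        unfolding corr_sup_def using True \<sigma> k D
        by (intro mult_right_mono powr_mono2') (auto intro: add_nonneg_nonneg)
      then have "corr_sup D k \<sigma> \<tau> powr (1/p) \<le> corr_sup D k \<sigma> 0 powr (1/p)"
        using p by (intro powr_mono2) (auto simp: corr_sup_def)
      then have "corr_sup D k \<sigma> \<tau> powr (1/p) * corr_mass \<sigma> \<xi> \<tau>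
          \<le> corr_sup D k \<sigma> 0 powr (1/p) * (4 * sqrt pi * heat \<tau> (2 * \<sigma>))"
        using corr_mass_le_heat[OF \<sigma> \<xi>, of \<tau>] True by (intro mult_mono) (auto simp: corr_mass_def)
      then show ?thesis
        using True by (simp add: ennreal_mult[symmetric] heat_nonneg ennreal_leI mult_ac del: ennreal_mult)
    qed simp
  qed
  also have "\<dots> = ennreal ?c"
    using nn_integral_heat[of "2 * \<sigma>" "0::real"] \<sigma> by (simp add: nn_integral_cmult)
  finally show ?thesis .
qed

section \<open>Decay of the boundary correction in \<open>k\<close>\<close>

definition powr_antideriv :: "real \<Rightarrow> real \<Rightarrow> real" where
  "powr_antideriv c z = (if c = 1 then ln z else z powr (1 - c) / (1 - c))"

lemma powr_antideriv_has_real_derivative: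
  assumes "0 < z"
  shows "(powr_antideriv c has_real_derivative z powr (- c)) (at z)"
proof (cases "c = 1")
  case True
  have "(ln has_real_derivative inverse z) (at z)" using assms by (rule DERIV_ln)
  moreover have "inverse z = z powr (- c)" using True assms by (simp add: powr_minus)
  ultimately show ?thesis using True unfolding powr_antideriv_def by simp
next
  case False
  have "((\<lambda>z. z powr (1 - c)) has_real_derivative (1 - c) * z powr (1 - c - 1)) (at z)"
    using assms by (rule has_real_derivative_powr)
  then have "((\<lambda>z. z powr (1 - c) / (1 - c)) has_real_derivative (1 - c) * z powr (1 - c - 1) / (1 - c)) (at z)"
    by (rule DERIV_cdivide)
  moreover have "(1 - c) * z powr (1 - c - 1) / (1 - c) = z powr (- c)" using False by simp
  ultimately show ?thesis using False unfolding powr_antideriv_def by simp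
qed

lemma powr_antideriv_mono:
  assumes "0 < a" "a \<le> b"
  shows "powr_antideriv c a \<le> powr_antideriv c b"
proof (rule DERIV_nonneg_imp_nondecreasing[OF assms(2)])
  show "\<exists>y. DERIV (powr_antideriv c) x :> y \<and> 0 \<le> y" if "a \<le> x" "x \<le> b" for x
    using powr_antideriv_has_real_derivative[of x c] that assms by auto
qed

lemma nn_integral_powr_affine:
  assumes \<sigma>: "0 < \<sigma>" and k: "0 < k" and L: "0 \<le> L"
  shows "(\<integral>\<^sup>+\<tau>. ennreal ((\<sigma> + k * \<tau>) powr (- c)) * indicator {0..L} \<tau> \<partial>lborel)
    = ennreal ((powr_antideriv c (\<sigma> + k * L) - powr_antideriv c \<sigma>) / k)"
proof -
  have d: "((\<lambda>\<tau>. powr_antideriv c (\<sigma> + k * \<tau>) / k) has_real_derivative (\<sigma> + k * \<tau>) powr (- c)) (at \<tau>)"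
    if "\<tau> \<in> {0..L}" for \<tau>
  proof -
    have pos: "0 < \<sigma> + k * \<tau>" using that \<sigma> k by (simp add: add_pos_nonneg)
    have "((\<lambda>\<tau>. \<sigma> + k * \<tau>) has_real_derivative k) (at \<tau>)"
      by (auto intro!: derivative_eq_intros)
    from DERIV_chain2[OF powr_antideriv_has_real_derivative[OF pos] this]
    have "((\<lambda>\<tau>. powr_antideriv c (\<sigma> + k * \<tau>)) has_real_derivative (\<sigma> + k * \<tau>) powr (- c) * k) (at \<tau>)" .
    from DERIV_cdivide[OF this, of k] show ?thesis using k by simp
  qed
  have "((\<lambda>\<tau>. (\<sigma> + k * \<tau>) powr (- c))
      has_integral (powr_antideriv c (\<sigma> + k * L) / k - powr_antideriv c (\<sigma> + k * 0) / k)) {0..L}"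
    by (rule fundamental_theorem_of_calculus[OF L])
       (use d in \<open>auto simp: has_real_derivative_iff_has_vector_derivative[symmetric] intro: DERIV_subset\<close>)
  from nn_integral_has_integral_lebesgue'[OF _ this] show ?thesis
    by (simp add: diff_divide_distrib)
qed

definition powr_gauss_bound :: "real \<Rightarrow> real \<Rightarrow> real \<Rightarrow> real" where
  "powr_gauss_bound c k \<sigma> = (powr_antideriv c (\<sigma> + k * sqrt \<sigma>) - powr_antideriv c \<sigma>) / k
     + (k * sqrt \<sigma>) powr (- c) * (8 * pi * \<sigma>) powr (1/2)"

(* Split at \<tau> = \<surd>\<sigma>: below it drop the Gaussian, above it bound (\<sigma> + k\<tau>)^(-c) by (k\<surd>\<sigma>)^(-c). *)
lemma nn_integral_powr_gauss_le:
  assumes \<sigma>: "0 < \<sigma>" and k: "0 < k" and c: "0 \<le> c"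
  shows "(\<integral>\<^sup>+\<tau>. ennreal (indicator {0<..} \<tau> * ((\<sigma> + k * \<tau>) powr (- c) * exp (- (\<tau>^2) / (8 * \<sigma>)))) \<partial>lborel)
    \<le> ennreal (powr_gauss_bound c k \<sigma>)"
proof -
  define L where "L = sqrt \<sigma>"
  have L: "0 < L" using \<sigma> by (simp add: L_def)
  define T0 where "T0 = (k * L) powr (- c) * (8 * pi * \<sigma>) powr (1/2)"
  have T0: "0 \<le> T0" by (simp add: T0_def)
  have pt: "ennreal (indicator {0<..} \<tau> * ((\<sigma> + k * \<tau>) powr (- c) * exp (- (\<tau>^2) / (8 * \<sigma>))))
      \<le> ennreal ((\<sigma> + k * \<tau>) powr (- c)) * indicator {0..L} \<tau> + ennreal T0 * ennreal (heat \<tau> (2 * \<sigma>))"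
    for \<tau>
  proof (cases "0 < \<tau>")
    case True
    show ?thesis
    proof (cases "\<tau> \<le> L")
      case True2: True
      have "(\<sigma> + k * \<tau>) powr (- c) * exp (- (\<tau>^2) / (8 * \<sigma>)) \<le> (\<sigma> + k * \<tau>) powr (- c) * 1"
        using \<sigma> by (intro mult_left_mono) auto
      then have "ennreal (indicator {0<..} \<tau> * ((\<sigma> + k * \<tau>) powr (- c) * exp (- (\<tau>^2) / (8 * \<sigma>))))
          \<le> ennreal ((\<sigma> + k * \<tau>) powr (- c)) * indicator {0..L} \<tau>"
        using True True2 by (simp add: ennreal_leI)
      then show ?thesis by (rule order_trans) simp
    next
      case False
      have "(\<sigma> + k * \<tau>) powr (- c) \<le> (k * L) powr (- c)"
        using False k \<sigma> c L by (intro powr_mono2') (auto intro: add_increasing)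
      then have "(\<sigma> + k * \<tau>) powr (- c) * exp (- (\<tau>^2) / (8 * \<sigma>)) \<le> (k * L) powr (- c) * exp (- (\<tau>^2) / (8 * \<sigma>))"
        by (rule mult_right_mono) simp
      also have "\<dots> = T0 * heat \<tau> (2 * \<sigma>)"
        unfolding T0_def exp_eq_heat[OF \<sigma>] by (simp add: mult_ac)
      finally have "ennreal (indicator {0<..} \<tau> * ((\<sigma> + k * \<tau>) powr (- c) * exp (- (\<tau>^2) / (8 * \<sigma>))))
          \<le> ennreal T0 * ennreal (heat \<tau> (2 * \<sigma>))"
        using True T0 by (simp add: ennreal_mult[symmetric] heat_nonneg ennreal_leI del: ennreal_mult)
      then show ?thesis by (rule order_trans) simp
    qed
  qed simp
  have "(\<integral>\<^sup>+\<tau>. ennreal (indicator {0<..} \<tau> * ((\<sigma> + k * \<tau>) powr (- c) * exp (- (\<tau>^2) / (8 * \<sigma>)))) \<partial>lborel)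
      \<le> (\<integral>\<^sup>+\<tau>. ennreal ((\<sigma> + k * \<tau>) powr (- c)) * indicator {0..L} \<tau> + ennreal T0 * ennreal (heat \<tau> (2 * \<sigma>)) \<partial>lborel)"
    using pt by (intro nn_integral_mono)
  also have "\<dots> = (\<integral>\<^sup>+\<tau>. ennreal ((\<sigma> + k * \<tau>) powr (- c)) * indicator {0..L} \<tau> \<partial>lborel)
      + ennreal T0 * (\<integral>\<^sup>+\<tau>. ennreal (heat (\<tau>::real) (2 * \<sigma>)) \<partial>lborel)"
    by (subst nn_integral_add) (auto intro!: nn_integral_cmult)
  also have "\<dots> = ennreal ((powr_antideriv c (\<sigma> + k * L) - powr_antideriv c \<sigma>) / k) + ennreal T0"
    using nn_integral_powr_affine[OF \<sigma> k less_imp_le[OF L]] nn_integral_heat[of "2 * \<sigma>" "0::real"] \<sigma>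
    by simp
  also have "\<dots> = ennreal ((powr_antideriv c (\<sigma> + k * L) - powr_antideriv c \<sigma>) / k + T0)"
  proof (rule ennreal_plus[symmetric, OF _ T0])
    have "powr_antideriv c \<sigma> \<le> powr_antideriv c (\<sigma> + k * L)"
      using k L by (intro powr_antideriv_mono[OF \<sigma>]) simp
    then show "0 \<le> (powr_antideriv c (\<sigma> + k * L) - powr_antideriv c \<sigma>) / k" using k by simp
  qed
  finally show ?thesis by (simp add: powr_gauss_bound_def L_def T0_def)
qed

lemma powr_add_le_add_powr:
  fixes a b r :: real
  assumes a: "0 \<le> a" and b: "0 \<le> b" and r: "0 < r" "r \<le> 1"
  shows "(a + b) powr r \<le> a powr r + b powr r"
proof (cases "a + b = 0")
  case True then show ?thesis using assms by simp
next
  case False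
  then have s: "a + b > 0" using assms by simp
  have x1: "a / (a + b) \<le> (a / (a + b)) powr r"
    using powr_mono'[OF r(2), of "a / (a + b)"] a b s by simp
  have x2: "b / (a + b) \<le> (b / (a + b)) powr r"
    using powr_mono'[OF r(2), of "b / (a + b)"] a b s by simp
  have "(a + b) powr r = (a + b) powr r * (a / (a + b) + b / (a + b))"
    using s by (simp add: add_divide_distrib[symmetric])
  also have "\<dots> \<le> (a + b) powr r * ((a / (a + b)) powr r + (b / (a + b)) powr r)"
    using x1 x2 by (intro mult_left_mono add_mono) auto
  also have "\<dots> = a powr r + b powr r"
    using s a b by (simp add: powr_divide distrib_left)
  finally show ?thesis .
qed

lemma powr_gauss_tail_eq:
  assumes \<sigma>: "0 < \<sigma>" and k: "0 < k"
  shows "(k * sqrt \<sigma>) powr (- c) * (8 * pi * \<sigma>) powr (1/2) = sqrt (8 * pi) * k powr (- c) * \<sigma> powr ((1 - c) / 2)"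
proof -
  have "(k * sqrt \<sigma>) powr (- c) = k powr (- c) * \<sigma> powr (- c / 2)"
    using \<sigma> k by (simp add: powr_mult powr_half_sqrt[symmetric] powr_powr)
  moreover have "(8 * pi * \<sigma>) powr (1/2) = sqrt (8 * pi) * \<sigma> powr (1/2)"
    using \<sigma> by (simp add: powr_mult powr_half_sqrt real_sqrt_mult)
  moreover have "\<sigma> powr (- c / 2) * \<sigma> powr (1/2) = \<sigma> powr ((1 - c) / 2)"
    by (simp add: powr_add[symmetric] diff_divide_distrib)
  ultimately show ?thesis by (simp add: mult_ac)
qed

lemma powr_gauss_bound_lt1:
  assumes c: "0 \<le> c" "c < 1" and \<sigma>: "0 < \<sigma>" and k: "0 < k"
  shows "powr_gauss_bound c k \<sigma> \<le> k powr (- c) * (1 / (1 - c) + sqrt (8 * pi)) * \<sigma> powr ((1 - c) / 2)"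
proof -
  have "(\<sigma> + k * sqrt \<sigma>) powr (1 - c) \<le> \<sigma> powr (1 - c) + (k * sqrt \<sigma>) powr (1 - c)"
    using c \<sigma> k by (intro powr_add_le_add_powr) auto
  then have "powr_antideriv c (\<sigma> + k * sqrt \<sigma>) - powr_antideriv c \<sigma> \<le> (k * sqrt \<sigma>) powr (1 - c) / (1 - c)"
    using c unfolding powr_antideriv_def by (simp add: diff_divide_distrib[symmetric] divide_right_mono)
  also have "(k * sqrt \<sigma>) powr (1 - c) = k * (k powr (- c) * \<sigma> powr ((1 - c) / 2))"
  proof -
    have "(k * sqrt \<sigma>) powr (1 - c) = k powr (1 - c) * \<sigma> powr ((1 - c) / 2)"
      using \<sigma> k by (simp add: powr_mult powr_half_sqrt[symmetric] powr_powr)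
    moreover have "k powr (1 - c) = k * k powr (- c)" using k by (simp add: powr_diff powr_minus field_simps)
    ultimately show ?thesis by simp
  qed
  finally have "(powr_antideriv c (\<sigma> + k * sqrt \<sigma>) - powr_antideriv c \<sigma>) / k
      \<le> k powr (- c) * \<sigma> powr ((1 - c) / 2) / (1 - c)"
    using k by (simp add: divide_le_eq field_simps)
  then show ?thesis
    using powr_gauss_tail_eq[OF \<sigma> k, of c] by (simp add: powr_gauss_bound_def algebra_simps)
qed

lemma powr_gauss_bound_gt1:
  assumes c: "1 < c" and \<sigma>: "0 < \<sigma>" and k: "1 \<le> k"
  shows "powr_gauss_bound c k \<sigma> \<le> (1 / k) * (\<sigma> powr (1 - c) / (c - 1) + sqrt (8 * pi) * \<sigma> powr ((1 - c) / 2))"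
proof -
  have k0: "0 < k" using k by simp
  have a: "(\<sigma> + k * sqrt \<sigma>) powr (1 - c) / (1 - c) \<le> 0"
    using c by (intro divide_nonneg_neg) auto
  have b: "- (\<sigma> powr (1 - c) / (1 - c)) = \<sigma> powr (1 - c) / (c - 1)"
    using c by (simp add: field_simps)
  have "powr_antideriv c (\<sigma> + k * sqrt \<sigma>) - powr_antideriv c \<sigma> \<le> \<sigma> powr (1 - c) / (c - 1)"
    unfolding powr_antideriv_def using c a b by simp
  then have "(powr_antideriv c (\<sigma> + k * sqrt \<sigma>) - powr_antideriv c \<sigma>) / k \<le> (\<sigma> powr (1 - c) / (c - 1)) / k"
    using k0 by (intro divide_right_mono) auto
  then have H: "(powr_antideriv c (\<sigma> + k * sqrt \<sigma>) - powr_antideriv c \<sigma>) / k \<le> (1 / k) * (\<sigma> powr (1 - c) / (c - 1))"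
    by (simp add: mult.commute)
  have "k powr (- c) \<le> k powr (- 1)" using k c by (intro powr_mono) auto
  then have "k powr (- c) \<le> 1 / k" using k0 by (simp add: powr_minus_divide)
  then have T: "sqrt (8 * pi) * k powr (- c) * \<sigma> powr ((1 - c) / 2) \<le> sqrt (8 * pi) * (1 / k) * \<sigma> powr ((1 - c) / 2)"
    by (intro mult_right_mono mult_left_mono) auto
  show ?thesis
    using H T powr_gauss_tail_eq[OF \<sigma> k0, of c] by (simp add: powr_gauss_bound_def algebra_simps)
qed


lemma powr_gauss_bound_eq1:
  assumes \<sigma>: "0 < \<sigma>" and k: "1 \<le> k"
  shows "powr_gauss_bound 1 k \<sigma> \<le> (1 / k) * (ln k + \<sigma> powr (-1/2) + sqrt (8 * pi))"
proof -
  have k0: "0 < k" using k by simp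
  have ss: "0 < sqrt \<sigma>" using \<sigma> by simp
  have pos: "0 < \<sigma> + k * sqrt \<sigma>" using \<sigma> k0 ss by (simp add: add_pos_pos)
  have "powr_antideriv 1 (\<sigma> + k * sqrt \<sigma>) - powr_antideriv 1 \<sigma> = ln ((\<sigma> + k * sqrt \<sigma>) / \<sigma>)"
    unfolding powr_antideriv_def using \<sigma> pos by (simp add: ln_div)
  also have "(\<sigma> + k * sqrt \<sigma>) / \<sigma> = 1 + k * (1 / sqrt \<sigma>)"
    using \<sigma> by (simp add: field_simps)
  also have "ln (1 + k * (1 / sqrt \<sigma>)) \<le> ln (k * (1 + 1 / sqrt \<sigma>))"
    using k ss by (subst ln_le_cancel_iff) (auto simp: algebra_simps add_pos_nonneg)
  also have "\<dots> = ln k + ln (1 + 1 / sqrt \<sigma>)"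
  proof -
    have "0 < 1 + 1 / sqrt \<sigma>" using ss by (simp add: add_pos_nonneg)
    then show ?thesis using k0 by (simp add: ln_mult)
  qed
  also have "ln (1 + 1 / sqrt \<sigma>) \<le> 1 / sqrt \<sigma>"
    using ss by (intro ln_add_one_self_le_self) simp
  finally have "powr_antideriv 1 (\<sigma> + k * sqrt \<sigma>) - powr_antideriv 1 \<sigma> \<le> ln k + \<sigma> powr (-1/2)"
    using \<sigma> by (simp add: powr_minus_divide powr_half_sqrt)
  then have le: "(powr_antideriv 1 (\<sigma> + k * sqrt \<sigma>) - powr_antideriv 1 \<sigma>) / k \<le> (ln k + \<sigma> powr (-1/2)) / k"
    using k0 by (intro divide_right_mono) auto
  have T: "(k * sqrt \<sigma>) powr (- 1) * (8 * pi * \<sigma>) powr (1/2) = sqrt (8 * pi) * (1 / k)"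
    using powr_gauss_tail_eq[OF \<sigma> k0, of 1] k0 \<sigma> by (simp add: powr_minus_divide)
  have eq: "(1 / k) * (ln k + \<sigma> powr (-1/2) + sqrt (8 * pi)) = (ln k + \<sigma> powr (-1/2)) / k + sqrt (8 * pi) * (1 / k)"
    using k0 by (simp add: field_simps)
  show ?thesis unfolding powr_gauss_bound_def T eq using le by linarith
qed


lemma fp_nonneg: "1 \<le> r \<Longrightarrow> 0 \<le> fp N p r"
  by (simp add: fp_def)

(* With n = N - 1, the regimes p < p_N, p = p_N, p > p_N of f_p are c = n/(2p) > 1, = 1, < 1. *)
lemma powr_gauss_bound_le_fp:
  assumes p: "1 \<le> p"
  obtains a b e\<^sub>1 e\<^sub>2 where "0 \<le> a" "0 \<le> b" "e\<^sub>1 \<le> 1/2" "e\<^sub>2 \<le> 1/2"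
    "\<And>k \<sigma>. exp 1 \<le> k \<Longrightarrow> 0 < \<sigma> \<Longrightarrow>
       powr_gauss_bound (real n / (2 * p)) k \<sigma> \<le> fp (Suc n) p k * (a * \<sigma> powr e\<^sub>1 + b * \<sigma> powr e\<^sub>2)"
proof -
  define c where "c = real n / (2 * p)"
  have k1: "1 \<le> k" if "exp 1 \<le> k" for k :: real
    using that exp_ge_add_one_self[of 1] by linarith
  consider "p < real n / 2" | "p = real n / 2" | "real n / 2 < p" by linarith
  then show ?thesis
  proof cases
    case 1
    then have c1: "1 < c" using p by (simp add: c_def field_simps)
    show ?thesis
    proof (rule that[of "1 / (c - 1)" "sqrt (8 * pi)" "1 - c" "(1 - c) / 2"])
      fix k \<sigma> :: real
      assume k: "exp 1 \<le> k" and \<sigma>: "0 < \<sigma>"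
      have "powr_gauss_bound c k \<sigma> \<le> (1 / k) * (\<sigma> powr (1 - c) / (c - 1) + sqrt (8 * pi) * \<sigma> powr ((1 - c) / 2))"
        using c1 \<sigma> k1[OF k] by (intro powr_gauss_bound_gt1) auto
      then show "powr_gauss_bound (real n / (2 * p)) k \<sigma>
          \<le> fp (Suc n) p k * (1 / (c - 1) * \<sigma> powr (1 - c) + sqrt (8 * pi) * \<sigma> powr ((1 - c) / 2))"
        using 1 by (simp add: fp_def c_def)
    qed (use c1 in auto)
  next
    case 2
    then have c1: "real n / (2 * p) = 1" using p by (simp add: field_simps)
    show ?thesis
    proof (rule that[of 1 "1 + sqrt (8 * pi)" "-1/2" 0])
      fix k \<sigma> :: real
      assume k: "exp 1 \<le> k" and \<sigma>: "0 < \<sigma>"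
      have lnk: "1 \<le> ln k" using k by (metis exp_gt_zero ln_exp ln_le_cancel_iff order_less_le_trans)
      have h1: "1 * \<sigma> powr (-1/2) \<le> ln k * \<sigma> powr (-1/2)" by (rule mult_right_mono[OF lnk]) simp
      have h2: "1 * sqrt (8 * pi) \<le> ln k * sqrt (8 * pi)" by (rule mult_right_mono[OF lnk]) simp
      have "ln k + \<sigma> powr (-1/2) + sqrt (8 * pi) \<le> ln k * (\<sigma> powr (-1/2) + (1 + sqrt (8 * pi)))"
        unfolding distrib_left using h1 h2 by linarith
      then have "(1 / k) * (ln k + \<sigma> powr (-1/2) + sqrt (8 * pi))
          \<le> (1 / k) * (ln k * (\<sigma> powr (-1/2) + (1 + sqrt (8 * pi))))"
        using k1[OF k] by (intro mult_left_mono) auto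
      with powr_gauss_bound_eq1[OF \<sigma> k1[OF k]]
      have "powr_gauss_bound 1 k \<sigma> \<le> (1 / k) * (ln k * (\<sigma> powr (-1/2) + (1 + sqrt (8 * pi))))"
        by (rule order_trans)
      then show "powr_gauss_bound (real n / (2 * p)) k \<sigma>
          \<le> fp (Suc n) p k * (1 * \<sigma> powr (-1/2) + (1 + sqrt (8 * pi)) * \<sigma> powr 0)"
        using 2 \<sigma> by (simp add: fp_def c1)
    qed auto
  next
    case 3
    then have c1: "c < 1" and c0: "0 \<le> c" using p by (simp_all add: c_def field_simps)
    show ?thesis
    proof (rule that[of "1 / (1 - c) + sqrt (8 * pi)" 0 "(1 - c) / 2" 0])
      fix k \<sigma> :: real
      assume k: "exp 1 \<le> k" and \<sigma>: "0 < \<sigma>"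
      have "powr_gauss_bound c k \<sigma> \<le> k powr (- c) * (1 / (1 - c) + sqrt (8 * pi)) * \<sigma> powr ((1 - c) / 2)"
        using c0 c1 \<sigma> k1[OF k] by (intro powr_gauss_bound_lt1) auto
      then show "powr_gauss_bound (real n / (2 * p)) k \<sigma>
          \<le> fp (Suc n) p k * ((1 / (1 - c) + sqrt (8 * pi)) * \<sigma> powr ((1 - c) / 2) + 0 * \<sigma> powr 0)"
        using 3 by (simp add: fp_def c_def mult_ac)
    qed (use c0 c1 in auto)
  qed
qed


lemma powr_mult_exp_le:
  fixes u m :: real
  assumes u: "0 < u" and m: "0 < m"
  shows "u powr m * exp (- u) \<le> m powr m"
proof -
  have "ln (u / m) \<le> u / m - 1" using u m by (intro ln_le_minus_one) simp
  then have "m * ln (u / m) \<le> m * (u / m - 1)" using m by (intro mult_left_mono) auto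
  then have "m * ln u - u \<le> m * ln m" using u m by (simp add: ln_div algebra_simps)
  then have "exp (m * ln u - u) \<le> exp (m * ln m)" by simp
  then show ?thesis using u m by (simp add: powr_def exp_diff exp_minus field_simps)
qed

(* In the region \<xi> + \<epsilon>\<sigma> > R either \<sigma> is bounded below, or \<xi> > R/2 and the Gaussian
   beats any power of \<sigma>. *)
lemma powr_mult_gauss_bounded:
  fixes m \<epsilon> R :: real
  assumes m: "0 < m" and \<epsilon>: "0 < \<epsilon>" and R: "0 < R"
  obtains U where "0 \<le> U"
    "\<And>\<sigma> \<xi>. 0 < \<sigma> \<Longrightarrow> 0 \<le> \<xi> \<Longrightarrow> R < \<xi> + \<epsilon> * \<sigma> \<Longrightarrow> \<sigma> powr (- m) * exp (- (\<xi>^2) / (8 * \<sigma>)) \<le> U"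
proof
  define s0 where "s0 = R / (2 * \<epsilon>)"
  define a where "a = R^2 / 32"
  have s0: "s0 > 0" and a: "a > 0" using R \<epsilon> by (auto simp: s0_def a_def)
  show "0 \<le> max (s0 powr (- m)) (a powr (- m) * m powr m)" by (simp add: le_max_iff_disj)
  fix \<sigma> \<xi> :: real
  assume \<sigma>: "0 < \<sigma>" and \<xi>: "0 \<le> \<xi>" and reg: "R < \<xi> + \<epsilon> * \<sigma>"
  show "\<sigma> powr (- m) * exp (- (\<xi>^2) / (8 * \<sigma>)) \<le> max (s0 powr (- m)) (a powr (- m) * m powr m)"
  proof (cases "s0 \<le> \<sigma>")
    case True
    have "\<sigma> powr (- m) \<le> s0 powr (- m)" using True s0 m by (intro powr_mono2') auto
    then have "\<sigma> powr (- m) * exp (- (\<xi>^2) / (8 * \<sigma>)) \<le> s0 powr (- m) * 1"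
      using \<sigma> by (intro mult_mono) auto
    then show ?thesis by simp
  next
    case False
    then have "\<epsilon> * \<sigma> < R / 2" using \<epsilon> by (simp add: s0_def field_simps)
    then have "R / 2 \<le> \<xi>" using reg by simp
    then have "(R/2)^2 \<le> \<xi>^2" using R by (intro power_mono) auto
    then have "(R/2)^2 / (8 * \<sigma>) \<le> \<xi>^2 / (8 * \<sigma>)" using \<sigma> by (intro divide_right_mono) auto
    moreover have "(R/2)^2 / (8 * \<sigma>) = a / \<sigma>" by (simp add: a_def power_divide)
    ultimately have ex: "exp (- (\<xi>^2) / (8 * \<sigma>)) \<le> exp (- (a / \<sigma>))" by simp
    define u where "u = a / \<sigma>"
    have u: "u > 0" using a \<sigma> by (simp add: u_def)
    have su: "\<sigma> = a / u" using a \<sigma> by (simp add: u_def)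
    have "\<sigma> powr (- m) = a powr (- m) * u powr m"
      unfolding su using a u by (simp add: powr_divide powr_minus field_simps)
    then have "\<sigma> powr (- m) * exp (- (\<xi>^2) / (8 * \<sigma>)) \<le> a powr (- m) * (u powr m * exp (- u))"
      using ex by (simp add: u_def mult.assoc mult_left_mono)
    also have "\<dots> \<le> a powr (- m) * m powr m"
      using powr_mult_exp_le[OF u m] by (intro mult_left_mono) auto
    finally show ?thesis by simp
  qed
qed


lemma corr_sup_powr_mult_eq:
  assumes p: "1 \<le> p" and \<sigma>: "0 < \<sigma>" and s: "0 < \<sigma> + k * \<tau>"
  shows "corr_sup D k \<sigma> \<tau> powr (1/p) * (sqrt 2 * \<sigma> powr (-1/2))
    = ((4 * pi) powr (- (D / (2 * p))) * (8 * pi) powr (- (1 / (2 * p))) * sqrt 2)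
      * \<sigma> powr (- (1 / (2 * p) + 1/2)) * (\<sigma> + k * \<tau>) powr (- (D / (2 * p)))"
proof -
  have e1: "corr_sup D k \<sigma> \<tau> powr (1/p)
      = (4 * pi * (\<sigma> + k * \<tau>)) powr (- (D / (2 * p))) * (8 * pi * \<sigma>) powr (- (1 / (2 * p)))"
    using p \<sigma> s by (simp add: corr_sup_def powr_mult powr_powr)
  have e2: "(4 * pi * (\<sigma> + k * \<tau>)) powr (- (D / (2 * p)))
      = (4 * pi) powr (- (D / (2 * p))) * (\<sigma> + k * \<tau>) powr (- (D / (2 * p)))"
    using s by (simp add: powr_mult)
  have e3: "(8 * pi * \<sigma>) powr (- (1 / (2 * p))) = (8 * pi) powr (- (1 / (2 * p))) * \<sigma> powr (- (1 / (2 * p)))"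
    using \<sigma> by (simp add: powr_mult)
  have e4: "\<sigma> powr (- (1 / (2 * p))) * \<sigma> powr (-1/2) = \<sigma> powr (- (1 / (2 * p) + 1/2))"
    by (simp add: powr_add[symmetric])
  show ?thesis unfolding e1 e2 e3 using e4 by (simp add: mult_ac)
qed


lemma corr_bound_le_powr_gauss_bound:
  assumes p: "1 \<le> p" and D: "0 \<le> D"
  obtains b where "0 \<le> b"
    "\<And>k \<sigma> \<xi>. 0 < k \<Longrightarrow> 0 < \<sigma> \<Longrightarrow> 0 \<le> \<xi> \<Longrightarrow> corr_bound D p k \<sigma> \<xi>
       \<le> ennreal (b * \<sigma> powr (- (1 / (2 * p) + 1/2)) * exp (- (\<xi>^2) / (8 * \<sigma>)) * powr_gauss_bound (D / (2 * p)) k \<sigma>)"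
proof
  define b where "b = (4 * pi) powr (- (D / (2 * p))) * (8 * pi) powr (- (1 / (2 * p))) * sqrt 2"
  show "0 \<le> b" by (simp add: b_def)
  fix k \<sigma> \<xi> :: real
  assume k: "0 < k" and \<sigma>: "0 < \<sigma>" and \<xi>: "0 \<le> \<xi>"
  define P where "P = b * \<sigma> powr (- (1 / (2 * p) + 1/2)) * exp (- (\<xi>^2) / (8 * \<sigma>))"
  have P: "0 \<le> P" by (simp add: P_def b_def)
  have pt: "ennreal (indicator {0<..} \<tau> * (corr_sup D k \<sigma> \<tau> powr (1/p) * corr_mass \<sigma> \<xi> \<tau>))
      \<le> ennreal P * ennreal (indicator {0<..} \<tau> * ((\<sigma> + k * \<tau>) powr (- (D / (2 * p))) * exp (- (\<tau>^2) / (8 * \<sigma>))))"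
    for \<tau>
  proof (cases "0 < \<tau>")
    case True
    have s: "0 < \<sigma> + k * \<tau>" using \<sigma> k True by (simp add: add_pos_pos)
    have ex: "exp (- ((\<xi> + \<tau>)^2) / (8 * \<sigma>)) \<le> exp (- (\<xi>^2) / (8 * \<sigma>)) * exp (- (\<tau>^2) / (8 * \<sigma>))"
    proof -
      have "- ((\<xi> + \<tau>)^2) / (8 * \<sigma>) \<le> - (\<xi>^2) / (8 * \<sigma>) + - (\<tau>^2) / (8 * \<sigma>)"
        using \<xi> True \<sigma> by (simp add: divide_right_mono power2_eq_square field_simps)
      then show ?thesis by (simp add: exp_add[symmetric])
    qed
    have "corr_sup D k \<sigma> \<tau> powr (1/p) * corr_mass \<sigma> \<xi> \<tau>
        = (corr_sup D k \<sigma> \<tau> powr (1/p) * (sqrt 2 * \<sigma> powr (-1/2))) * exp (- ((\<xi> + \<tau>)^2) / (8 * \<sigma>))"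
      by (simp add: corr_mass_def mult.assoc)
    also have "\<dots> = (b * \<sigma> powr (- (1 / (2 * p) + 1/2)) * (\<sigma> + k * \<tau>) powr (- (D / (2 * p))))
        * exp (- ((\<xi> + \<tau>)^2) / (8 * \<sigma>))"
      unfolding corr_sup_powr_mult_eq[OF p \<sigma> s] b_def by (rule refl)
    also have "\<dots> \<le> (b * \<sigma> powr (- (1 / (2 * p) + 1/2)) * (\<sigma> + k * \<tau>) powr (- (D / (2 * p))))
        * (exp (- (\<xi>^2) / (8 * \<sigma>)) * exp (- (\<tau>^2) / (8 * \<sigma>)))"
      using ex by (intro mult_left_mono) (auto simp: b_def)
    also have "\<dots> = P * ((\<sigma> + k * \<tau>) powr (- (D / (2 * p))) * exp (- (\<tau>^2) / (8 * \<sigma>)))"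
      by (simp add: P_def mult_ac)
    finally show ?thesis
      using True P by (simp add: ennreal_mult[symmetric] ennreal_leI del: ennreal_mult)
  qed simp
  have "corr_bound D p k \<sigma> \<xi>
      \<le> (\<integral>\<^sup>+\<tau>. ennreal P * ennreal (indicator {0<..} \<tau> * ((\<sigma> + k * \<tau>) powr (- (D / (2 * p))) * exp (- (\<tau>^2) / (8 * \<sigma>)))) \<partial>lborel)"
    unfolding corr_bound_def by (intro nn_integral_mono pt)
  also have "\<dots> = ennreal P * (\<integral>\<^sup>+\<tau>. ennreal (indicator {0<..} \<tau> * ((\<sigma> + k * \<tau>) powr (- (D / (2 * p))) * exp (- (\<tau>^2) / (8 * \<sigma>)))) \<partial>lborel)"
    by (rule nn_integral_cmult) measurable
  also have "\<dots> \<le> ennreal P * ennreal (powr_gauss_bound (D / (2 * p)) k \<sigma>)"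
    using D p by (intro mult_left_mono nn_integral_powr_gauss_le \<sigma> k) auto
  finally show "corr_bound D p k \<sigma> \<xi>
      \<le> ennreal (b * \<sigma> powr (- (1 / (2 * p) + 1/2)) * exp (- (\<xi>^2) / (8 * \<sigma>)) * powr_gauss_bound (D / (2 * p)) k \<sigma>)"
    using P by (simp add: P_def ennreal_mult')
qed


lemma corr_bound_le_fp:
  assumes p: "1 \<le> p" and \<epsilon>: "0 < \<epsilon>" and R: "0 < R"
  obtains C where "0 \<le> C"
    "\<And>k \<sigma> \<xi>. exp 1 \<le> k \<Longrightarrow> 0 < \<sigma> \<Longrightarrow> 0 \<le> \<xi> \<Longrightarrow> R < \<xi> + \<epsilon> * \<sigma> \<Longrightarrow>
       corr_bound (real n) p k \<sigma> \<xi> \<le> ennreal (C * fp (Suc n) p k)"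
proof -
  define q where "q = 1 / (2 * p) + 1/2"
  obtain b where b: "0 \<le> b" "\<And>k \<sigma> \<xi>. 0 < k \<Longrightarrow> 0 < \<sigma> \<Longrightarrow> 0 \<le> \<xi> \<Longrightarrow> corr_bound (real n) p k \<sigma> \<xi>
      \<le> ennreal (b * \<sigma> powr (- q) * exp (- (\<xi>^2) / (8 * \<sigma>)) * powr_gauss_bound (real n / (2 * p)) k \<sigma>)"
    using corr_bound_le_powr_gauss_bound[OF p of_nat_0_le_iff] unfolding q_def by blast
  obtain a\<^sub>1 a\<^sub>2 e\<^sub>1 e\<^sub>2 where a: "0 \<le> a\<^sub>1" "0 \<le> a\<^sub>2" "e\<^sub>1 \<le> 1/2" "e\<^sub>2 \<le> 1/2"
    and G: "\<And>k \<sigma>. exp 1 \<le> k \<Longrightarrow> 0 < \<sigma> \<Longrightarrow>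
      powr_gauss_bound (real n / (2 * p)) k \<sigma> \<le> fp (Suc n) p k * (a\<^sub>1 * \<sigma> powr e\<^sub>1 + a\<^sub>2 * \<sigma> powr e\<^sub>2)"
    using powr_gauss_bound_le_fp[OF p] by blast
  have "0 < 1 / (2 * p)" using p by simp
  then have m: "0 < q - e\<^sub>1" "0 < q - e\<^sub>2" unfolding q_def using a by linarith+
  obtain U\<^sub>1 where U\<^sub>1: "0 \<le> U\<^sub>1"
    "\<And>\<sigma> \<xi>. 0 < \<sigma> \<Longrightarrow> 0 \<le> \<xi> \<Longrightarrow> R < \<xi> + \<epsilon> * \<sigma> \<Longrightarrow> \<sigma> powr (- (q - e\<^sub>1)) * exp (- (\<xi>^2) / (8 * \<sigma>)) \<le> U\<^sub>1"
    using powr_mult_gauss_bounded[OF m(1) \<epsilon> R] by blast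
  obtain U\<^sub>2 where U\<^sub>2: "0 \<le> U\<^sub>2"
    "\<And>\<sigma> \<xi>. 0 < \<sigma> \<Longrightarrow> 0 \<le> \<xi> \<Longrightarrow> R < \<xi> + \<epsilon> * \<sigma> \<Longrightarrow> \<sigma> powr (- (q - e\<^sub>2)) * exp (- (\<xi>^2) / (8 * \<sigma>)) \<le> U\<^sub>2"
    using powr_mult_gauss_bounded[OF m(2) \<epsilon> R] by blast
  show ?thesis
  proof (rule that[of "b * (a\<^sub>1 * U\<^sub>1 + a\<^sub>2 * U\<^sub>2)"])
    show "0 \<le> b * (a\<^sub>1 * U\<^sub>1 + a\<^sub>2 * U\<^sub>2)" using a b U\<^sub>1 U\<^sub>2 by simp
    fix k \<sigma> \<xi> :: real
    assume k: "exp 1 \<le> k" and \<sigma>: "0 < \<sigma>" and \<xi>: "0 \<le> \<xi>" and reg: "R < \<xi> + \<epsilon> * \<sigma>"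
    have k1: "1 \<le> k" using k exp_ge_add_one_self[of 1] by linarith
    then have k0: "0 < k" by simp
    have fp: "0 \<le> fp (Suc n) p k" using k1 by (rule fp_nonneg)
    define E where "E = exp (- (\<xi>^2) / (8 * \<sigma>))"
    have pm: "\<sigma> powr (- q) * \<sigma> powr e = \<sigma> powr (- (q - e))" for e
      using powr_add[of \<sigma> "- q" e] by simp
    have "b * \<sigma> powr (- q) * E * powr_gauss_bound (real n / (2 * p)) k \<sigma>
        \<le> b * \<sigma> powr (- q) * E * (fp (Suc n) p k * (a\<^sub>1 * \<sigma> powr e\<^sub>1 + a\<^sub>2 * \<sigma> powr e\<^sub>2))"
      using G[OF k \<sigma>] b by (intro mult_left_mono) (auto simp: E_def)
    also have "\<dots> = b * fp (Suc n) p k * (a\<^sub>1 * ((\<sigma> powr (- q) * \<sigma> powr e\<^sub>1) * E) + a\<^sub>2 * ((\<sigma> powr (- q) * \<sigma> powr e\<^sub>2) * E))"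
      by (simp add: algebra_simps)
    also have "\<dots> \<le> b * fp (Suc n) p k * (a\<^sub>1 * U\<^sub>1 + a\<^sub>2 * U\<^sub>2)"
      unfolding pm E_def using U\<^sub>1(2)[OF \<sigma> \<xi> reg] U\<^sub>2(2)[OF \<sigma> \<xi> reg] a b fp
      by (intro mult_left_mono add_mono) auto
    finally have est: "b * \<sigma> powr (- q) * E * powr_gauss_bound (real n / (2 * p)) k \<sigma>
        \<le> b * (a\<^sub>1 * U\<^sub>1 + a\<^sub>2 * U\<^sub>2) * fp (Suc n) p k"
      by (simp add: mult_ac)
    have "corr_bound (real n) p k \<sigma> \<xi> \<le> ennreal (b * \<sigma> powr (- q) * E * powr_gauss_bound (real n / (2 * p)) k \<sigma>)"
      using b(2)[OF k0 \<sigma> \<xi>] by (simp add: E_def)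
    also have "\<dots> \<le> ennreal (b * (a\<^sub>1 * U\<^sub>1 + a\<^sub>2 * U\<^sub>2) * fp (Suc n) p k)"
      using est by (rule ennreal_leI)
    finally show "corr_bound (real n) p k \<sigma> \<xi> \<le> ennreal (b * (a\<^sub>1 * U\<^sub>1 + a\<^sub>2 * U\<^sub>2) * fp (Suc n) p k)" .
  qed
qed

context Lp_datum
begin

lemma zN_small_eps:
  assumes T: "0 < T"
  shows "\<exists>C \<epsilon>0. 0 < \<epsilon>0 \<and> (\<forall>\<epsilon>. 0 < \<epsilon> \<and> \<epsilon> < \<epsilon>0 \<longrightarrow>
    (\<forall>x\<in>closure Omega. \<forall>t>T. \<bar>zN \<epsilon> \<phi> x t\<bar> \<le> C * \<epsilon> powr (real (DIM('a) + 1) / (2 * p))))"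
proof (rule exI[of _ "(Lp_mass / p + 1) * (((4 * pi * T) powr (- real DIM('a \<times> real) / 2)) powr (1/p) * 2)"],
    rule exI[of _ 1], intro conjI allI impI ballI)
  fix \<epsilon> t :: real and x :: "'a \<times> real"
  assume \<epsilon>: "0 < \<epsilon> \<and> \<epsilon> < 1" and x: "x \<in> closure Omega" and t: "T < t"
  have "\<bar>zN \<epsilon> \<phi> x t\<bar> \<le> (Lp_mass / p + 1) * (((4 * pi * (t / \<epsilon>)) powr (- real DIM('a \<times> real) / 2)) powr (1/p) * 2)"
    using x \<epsilon> t T by (intro abs_zN_le) (auto simp: closure_Omega)
  also have "\<dots> \<le> (Lp_mass / p + 1) * (((4 * pi * T) powr (- real DIM('a \<times> real) / 2)) powr (1/p)
      * \<epsilon> powr (real DIM('a \<times> real) / (2 * p)) * 2)"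
    using heat_sup_powr_scaled_le[of p "real DIM('a \<times> real)" T \<epsilon> t] \<epsilon> t T p Lp_mass_nonneg
    by (intro mult_left_mono mult_right_mono) auto
  finally show "\<bar>zN \<epsilon> \<phi> x t\<bar> \<le> (Lp_mass / p + 1) * (((4 * pi * T) powr (- real DIM('a \<times> real) / 2)) powr (1/p) * 2)
      * \<epsilon> powr (real (DIM('a) + 1) / (2 * p))"
    by (simp add: mult_ac)
qed simp

lemma zek_small_eps:
  assumes T: "0 < T" and k: "0 \<le> k"
  shows "\<exists>C \<epsilon>0. 0 < \<epsilon>0 \<and> (\<forall>\<epsilon>. 0 < \<epsilon> \<and> \<epsilon> < \<epsilon>0 \<longrightarrow>
    (\<forall>x\<in>closure Omega. \<forall>t>T. \<bar>zek \<epsilon> k \<phi> x t\<bar> \<le> C * \<epsilon> powr (real (DIM('a) + 1) / (2 * p))))"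
proof -
  let ?D = "real DIM('a)" and ?c = "Lp_mass / p + 1"
  define h where "h s = ((4 * pi * s) powr (- real DIM('a \<times> real) / 2)) powr (1/p)" for s
  define C where "C = ?c * (h T + 8 * sqrt pi * corr_sup ?D k T 0 powr (1/p))"
  show ?thesis
  proof (rule exI[of _ C], rule exI[of _ 1], intro conjI allI impI ballI)
    fix \<epsilon> t :: real and x :: "'a \<times> real"
    assume \<epsilon>: "0 < \<epsilon> \<and> \<epsilon> < 1" and x: "x \<in> closure Omega" and t: "T < t"
    have x0: "0 \<le> snd x" using x by (auto simp: closure_Omega mem_Times_iff)
    have \<sigma>: "0 < t / \<epsilon>" using \<epsilon> t T by simp
    have w: "corr_bound ?D p k (t / \<epsilon>) (snd x) \<le> ennreal (corr_sup ?D k (t / \<epsilon>) 0 powr (1/p) * (4 * sqrt pi))"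
      using \<sigma> k p x0 by (intro corr_bound_le) auto
    have w0: "0 \<le> corr_sup ?D k (t / \<epsilon>) 0 powr (1/p) * (4 * sqrt pi)" by simp
    have "\<bar>zek \<epsilon> k \<phi> x t\<bar> \<le> \<bar>zD \<epsilon> \<phi> x t\<bar> + 2 * \<bar>zcorr k \<phi> x (t / \<epsilon>)\<bar>"
      unfolding zek_eq[OF x0 \<sigma> k w w0]
      using abs_triangle_ineq4[of "zD \<epsilon> \<phi> x t" "2 * zcorr k \<phi> x (t / \<epsilon>)"] by (simp add: abs_mult)
    also have "\<dots> \<le> ?c * (h (t / \<epsilon>) * 1) + 2 * (?c * (corr_sup ?D k (t / \<epsilon>) 0 powr (1/p) * (4 * sqrt pi)))"
      unfolding h_def by (intro add_mono mult_left_mono abs_zD_le abs_zcorr_le x0 \<sigma> k w w0) auto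
    also have "\<dots> = ?c * (h (t / \<epsilon>) + 8 * sqrt pi * corr_sup ?D k (t / \<epsilon>) 0 powr (1/p))"
      by (simp add: algebra_simps)
    also have "\<dots> \<le> ?c * (h T * \<epsilon> powr (real DIM('a \<times> real) / (2 * p))
        + 8 * sqrt pi * (corr_sup ?D k T 0 powr (1/p) * \<epsilon> powr ((?D + 1) / (2 * p))))"
      using heat_sup_powr_scaled_le[of p "real DIM('a \<times> real)" T \<epsilon> t]
        corr_sup_powr_scaled_le[of p ?D T \<epsilon> t k] \<epsilon> t T p Lp_mass_nonneg
      unfolding h_def by (intro mult_left_mono add_mono) auto
    also have "\<dots> = C * \<epsilon> powr (real (DIM('a) + 1) / (2 * p))"
      by (simp add: C_def algebra_simps)
    finally show "\<bar>zek \<epsilon> k \<phi> x t\<bar> \<le> C * \<epsilon> powr (real (DIM('a) + 1) / (2 * p))" .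
  qed simp
qed

lemma zek_minus_zD_large_k:
  assumes R: "0 < R" and \<epsilon>: "0 < \<epsilon>"
  shows "\<exists>C K. 1 < K \<and> (\<forall>k\<ge>K. \<forall>(x, t)\<in>Qset R. \<bar>zek \<epsilon> k \<phi> x t - zD \<epsilon> \<phi> x t\<bar> \<le> C * fp (DIM('a) + 1) p k)"
proof -
  obtain C where C: "0 \<le> C" "\<And>k \<sigma> \<xi>. exp 1 \<le> k \<Longrightarrow> 0 < \<sigma> \<Longrightarrow> 0 \<le> \<xi> \<Longrightarrow> R < \<xi> + \<epsilon> * \<sigma> \<Longrightarrow>
      corr_bound (real DIM('a)) p k \<sigma> \<xi> \<le> ennreal (C * fp (Suc DIM('a)) p k)"
    using corr_bound_le_fp[OF p \<epsilon> R] by blast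
  show ?thesis
  proof (rule exI[of _ "2 * (Lp_mass / p + 1) * C"], rule exI[of _ "exp 1"], intro conjI allI impI ballI)
    fix k :: real and z :: "('a \<times> real) \<times> real"
    assume k: "exp 1 \<le> k" and z: "z \<in> Qset R"
    obtain x t where z_eq: "z = (x, t)" and x: "0 \<le> snd x" and t: "0 < t" and reg: "R < snd x + t"
      using z by (cases z) (auto simp: Qset_def closure_Omega)
    have k1: "1 \<le> k" using k exp_ge_add_one_self[of 1] by linarith
    then have k0: "0 \<le> k" by simp
    have \<sigma>: "0 < t / \<epsilon>" using t \<epsilon> by simp
    have w: "corr_bound (real DIM('a)) p k (t / \<epsilon>) (snd x) \<le> ennreal (C * fp (Suc DIM('a)) p k)"
      using C(2)[OF k \<sigma> x] reg \<epsilon> by simp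
    have w0: "0 \<le> C * fp (Suc DIM('a)) p k" using C(1) k1 by (simp add: fp_nonneg)
    have "\<bar>zek \<epsilon> k \<phi> x t - zD \<epsilon> \<phi> x t\<bar> \<le> 2 * ((Lp_mass / p + 1) * (C * fp (Suc DIM('a)) p k))"
      using abs_zcorr_le[OF x \<sigma> k0 w w0] unfolding zek_eq[OF x \<sigma> k0 w w0] by simp
    then show "case z of (x, t) \<Rightarrow> \<bar>zek \<epsilon> k \<phi> x t - zD \<epsilon> \<phi> x t\<bar> \<le> 2 * (Lp_mass / p + 1) * C * fp (DIM('a) + 1) p k"
      unfolding z_eq by (simp only: case_prod_conv Suc_eq_plus1 mult_ac)
  qed simp
qed

end

theorem theorem5p2:
  fixes \<phi> :: "'a::euclidean_space \<times> real \<Rightarrow> real" and p :: real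
  defines "N \<equiv> DIM('a) + 1"
  assumes p: "1 \<le> p"
    and meas: "set_borel_measurable lebesgue Omega \<phi>"
    and Lp: "set_integrable lebesgue Omega (\<lambda>y. \<bar>\<phi> y\<bar> powr p)"
  shows "(\<forall>T>0. \<forall>k>0. \<exists>C \<epsilon>0. \<epsilon>0 > 0 \<and>
            (\<forall>\<epsilon>. 0 < \<epsilon> \<and> \<epsilon> < \<epsilon>0 \<longrightarrow>
              (\<forall>x\<in>closure Omega. \<forall>t>T. \<bar>zek \<epsilon> k \<phi> x t\<bar> \<le> C * \<epsilon> powr (real N / (2 * p)))))
       \<and> (\<forall>T>0. \<exists>C \<epsilon>0. \<epsilon>0 > 0 \<and>
            (\<forall>\<epsilon>. 0 < \<epsilon> \<and> \<epsilon> < \<epsilon>0 \<longrightarrow>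
              (\<forall>x\<in>closure Omega. \<forall>t>T. \<bar>zN \<epsilon> \<phi> x t\<bar> \<le> C * \<epsilon> powr (real N / (2 * p)))))
       \<and> (\<forall>R>0. \<forall>\<epsilon>>0. \<exists>C K. K > 1 \<and>
            (\<forall>k\<ge>K. \<forall>(x, t)\<in>Qset R. \<bar>zek \<epsilon> k \<phi> x t - zD \<epsilon> \<phi> x t\<bar> \<le> C * fp N p k))"
proof -
  interpret Lp_datum \<phi> p
    using p meas Lp by (rule Lp_datum.intro)
  show ?thesis
    unfolding N_def using zek_small_eps zN_small_eps zek_minus_zD_large_k by (auto intro: less_imp_le)
qed

end
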